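(* Let $T:L_2[a,b]^p\to L_2[a,b]^q$ be a bounded integral operator with continuous kernel function, let $\hat T$ be an estimator of $T$ which is a.s. an integral operator with continuous kernel (with adjoint $\hat T^*$), let $(\alpha_n)$ be positive reals, and suppose that $(\varphi,T)$ ranges over the source class $\mathcal F=\mathcal F(t,\beta,C)$. If $\mathbb E\|\hat T^*-T^*\|_{2,\infty}^2$ is bounded uniformly over $\mathcal F$, then for all $n$ and all $(\varphi,T)\in\mathcal F$, $$\mathbb E\left\|\left[(\alpha_nI+\hat T^*\hat T)^{-1}\hat T^*\hat T-(\alpha_nI+T^*T)^{-1}T^*T\right]\varphi\right\|_\infty=O\left(\sqrt{\alpha_n^{-1}\mathbb E\|\hat T^*-T^*\|^2_{2,\infty}}\right).$$
   Context: $\|\cdot\|$: $L_2$ norm; $\|\cdot\|_\infty$: sup norm; $\|A\|_{2,\infty}=\sup_{\|\psi\|\le1}\|A\psi\|_\infty$ for operators from $L_2$ into continuous functions. Hölder class $C^t_M[a,b]^p$ ($t\ge0$): continuous $g$ with $\|g^{(k)}\|_\infty\le M$ for $|k|\le\lfloor t\rfloor$ and $|g^{(k)}(z)-g^{(k)}(z')|\le M\|z-z'\|^{t-\lfloor t\rfloor}$ for $|k|=\lfloor t\rfloor$. Source class $\mathcal F(t,\beta,C)$ ($\beta,C>0$): pairs $(\varphi,T)$ with $\varphi\in C^t_M[a,b]^p$, $T^*$ bounded from $L_2[a,b]^q$ into continuous functions, $\varphi=(T^*T)^\beta T^*\psi$ for some $\psi\in L_2[a,b]^q$, and $\|T^*\|_{2,\infty}\vee\|\psi\|\vee\|T\|^{-1}\le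 C$. The $O(\cdot)$ constant does not depend on $n$ or on $(\varphi,T)\in\mathcal F$. *)

theory Defs
  imports "HOL-Analysis.Analysis" "HOL-Probability.Probability_Measure"
begin

definition cube :: "real \<Rightarrow> real \<Rightarrow> (real^'n) set" where
  "cube a b = {x. \<forall>i. a \<le> x $ i \<and> x $ i \<le> b}"

definition sqint :: "'a::euclidean_space set \<Rightarrow> ('a \<Rightarrow> real) \<Rightarrow> bool" where
  "sqint S f \<longleftrightarrow> f \<in> borel_measurable (lebesgue_on S) \<and>
                  integrable (lebesgue_on S) (\<lambda>x. (f x)^2)"

definition ip :: "'a::euclidean_space set \<Rightarrow> ('a \<Rightarrow> real) \<Rightarrow> ('a \<Rightarrow> real) \<Rightarrow> real" where
  "ip S f g = (\<integral>x. f x * g x \<partial>lebesgue_on S)"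

definition L2norm :: "'a::euclidean_space set \<Rightarrow> ('a \<Rightarrow> real) \<Rightarrow> real" where
  "L2norm S f = sqrt (\<integral>x. (f x)^2 \<partial>lebesgue_on S)"

definition L2_sums :: "'a::euclidean_space set \<Rightarrow> (nat \<Rightarrow> real) \<Rightarrow> (nat \<Rightarrow> 'a \<Rightarrow> real)
    \<Rightarrow> ('a \<Rightarrow> real) \<Rightarrow> bool" where
  "L2_sums S c e h \<longleftrightarrow> (\<lambda>N. L2norm S (\<lambda>x. h x - (\<Sum>j<N. c j * e j x))) \<longlonglongrightarrow> 0"

text \<open>Sup norm over S (ennreal-valued, so always well defined).\<close>
definition supn :: "'a set \<Rightarrow> ('a \<Rightarrow> real) \<Rightarrow> ennreal" where
  "supn S f = (SUP x\<in>S. ennreal \<bar>f x\<bar>)"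

definition Top :: "'p::euclidean_space set \<Rightarrow> ('q \<Rightarrow> 'p \<Rightarrow> real) \<Rightarrow> ('p \<Rightarrow> real) \<Rightarrow> 'q \<Rightarrow> real" where
  "Top Sp k \<phi> w = (\<integral>z. k w z * \<phi> z \<partial>lebesgue_on Sp)"

definition Tadj :: "'q::euclidean_space set \<Rightarrow> ('q \<Rightarrow> 'p \<Rightarrow> real) \<Rightarrow> ('q \<Rightarrow> real) \<Rightarrow> 'p \<Rightarrow> real" where
  "Tadj Sq k \<psi> z = (\<integral>w. k w z * \<psi> w \<partial>lebesgue_on Sq)"

definition cont_kernel :: "'q::topological_space set \<Rightarrow> 'p::topological_space set
    \<Rightarrow> ('q \<Rightarrow> 'p \<Rightarrow> real) \<Rightarrow> bool" where
  "cont_kernel Sq Sp k \<longleftrightarrow> continuous_on (Sq \<times> Sp) (\<lambda>(w,z). k w z)"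

definition norm_2inf :: "'q::euclidean_space set \<Rightarrow> 'p::euclidean_space set
    \<Rightarrow> ('q \<Rightarrow> 'p \<Rightarrow> real) \<Rightarrow> ennreal" where
  "norm_2inf Sq Sp k =
     (SUP \<psi>\<in>{\<psi>. sqint Sq \<psi> \<and> L2norm Sq \<psi> \<le> 1}. supn Sp (Tadj Sq k \<psi>))"

definition opnorm_L2 :: "'p::euclidean_space set \<Rightarrow> 'q::euclidean_space set
    \<Rightarrow> ('q \<Rightarrow> 'p \<Rightarrow> real) \<Rightarrow> ennreal" where
  "opnorm_L2 Sp Sq k =
     (SUP \<phi>\<in>{\<phi>. sqint Sp \<phi> \<and> L2norm Sp \<phi> \<le> 1}. ennreal (L2norm Sq (Top Sp k \<phi>)))"

definition eigsys :: "'a::euclidean_space set \<Rightarrow> (('a \<Rightarrow> real) \<Rightarrow> ('a \<Rightarrow> real))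
    \<Rightarrow> (nat \<Rightarrow> 'a \<Rightarrow> real) \<Rightarrow> (nat \<Rightarrow> real) \<Rightarrow> bool" where
  "eigsys S A e lam \<longleftrightarrow>
     (\<forall>j. sqint S (e j) \<and> 0 \<le> lam j) \<and>
     (\<forall>i j. ip S (e i) (e j) = (if i = j then 1 else 0)) \<and>
     (\<forall>f. sqint S f \<longrightarrow> L2_sums S (\<lambda>j. lam j * ip S f (e j)) e (A f))"

definition is_power_image :: "'a::euclidean_space set \<Rightarrow> (('a \<Rightarrow> real) \<Rightarrow> ('a \<Rightarrow> real))
    \<Rightarrow> real \<Rightarrow> ('a \<Rightarrow> real) \<Rightarrow> ('a \<Rightarrow> real) \<Rightarrow> bool" where
  "is_power_image S A \<beta> g \<phi> \<longleftrightarrow>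
     (\<exists>e lam. eigsys S A e lam \<and> L2_sums S (\<lambda>j. lam j powr \<beta> * ip S g (e j)) e \<phi>)"

definition pd :: "(real^'n) set \<Rightarrow> 'n \<Rightarrow> (real^'n \<Rightarrow> real) \<Rightarrow> real^'n \<Rightarrow> real" where
  "pd S i f x = vector_derivative (\<lambda>h. f (x + h *\<^sub>R axis i 1))
                  (at 0 within {h. x + h *\<^sub>R axis i 1 \<in> S})"

fun Dpar :: "(real^'n) set \<Rightarrow> 'n list \<Rightarrow> (real^'n \<Rightarrow> real) \<Rightarrow> real^'n \<Rightarrow> real" where
  "Dpar S [] f = f"
| "Dpar S (i # is) f = pd S i (Dpar S is f)"

definition holder :: "(real^'n) set \<Rightarrow> real \<Rightarrow> real \<Rightarrow> (real^'n \<Rightarrow> real) \<Rightarrow> bool" where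
  "holder S t L g \<longleftrightarrow>
     continuous_on S g \<and>
     (\<forall>ks i. length ks < nat \<lfloor>t\<rfloor> \<longrightarrow> (\<forall>x\<in>S.
         (\<lambda>h. Dpar S ks g (x + h *\<^sub>R axis i 1)) differentiable
            (at 0 within {h. x + h *\<^sub>R axis i 1 \<in> S}))) \<and>
     (\<forall>ks. length ks \<le> nat \<lfloor>t\<rfloor> \<longrightarrow> (\<forall>x\<in>S. \<bar>Dpar S ks g x\<bar> \<le> L)) \<and>
     (\<forall>ks. length ks = nat \<lfloor>t\<rfloor> \<longrightarrow> (\<forall>x\<in>S. \<forall>y\<in>S.
         \<bar>Dpar S ks g x - Dpar S ks g y\<bar> \<le> L * dist x y powr (t - of_int \<lfloor>t\<rfloor>)))"

section \<open>Source class F(t,beta,C); T is represented by its continuous kernel k\<close>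

definition src_class :: "real \<Rightarrow> real \<Rightarrow> real \<Rightarrow> real \<Rightarrow> real \<Rightarrow> real
    \<Rightarrow> ((real^'p \<Rightarrow> real) \<times> (real^'q \<Rightarrow> real^'p \<Rightarrow> real)) set" where
  "src_class a b t L \<beta> C = {(\<phi>, k).
     cont_kernel (cube a b) (cube a b) k \<and>
     holder (cube a b) t L \<phi> \<and>
     (\<exists>\<psi>. sqint (cube a b) \<psi> \<and> L2norm (cube a b) \<psi> \<le> C \<and>
          is_power_image (cube a b) (\<lambda>f. Tadj (cube a b) k (Top (cube a b) k f)) \<beta>
              (Tadj (cube a b) k \<psi>) \<phi>) \<and>
     norm_2inf (cube a b) (cube a b) k \<le> ennreal C \<and>
     ennreal (1 / C) \<le> opnorm_L2 (cube a b) (cube a b) k}"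

definition reg_inv :: "'p::euclidean_space set \<Rightarrow> 'q::euclidean_space set \<Rightarrow> ('q \<Rightarrow> 'p \<Rightarrow> real)
    \<Rightarrow> real \<Rightarrow> ('p \<Rightarrow> real) \<Rightarrow> 'p \<Rightarrow> real" where
  "reg_inv Sp Sq k \<alpha> h = (THE g. continuous_on Sp g \<and> (\<forall>z. z \<notin> Sp \<longrightarrow> g z = 0) \<and>
       (\<forall>z\<in>Sp. \<alpha> * g z + Tadj Sq k (Top Sp k g) z = h z))"

definition reg_proj :: "'p::euclidean_space set \<Rightarrow> 'q::euclidean_space set \<Rightarrow> ('q \<Rightarrow> 'p \<Rightarrow> real)
    \<Rightarrow> real \<Rightarrow> ('p \<Rightarrow> real) \<Rightarrow> 'p \<Rightarrow> real" where
  "reg_proj Sp Sq k \<alpha> \<phi> = reg_inv Sp Sq k \<alpha> (Tadj Sq k (Top Sp k \<phi>))"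

end

theory Submission
  imports Defs
begin

text \<open>
  Let \<open>p = (\<alpha>I + T\<^sup>*T)\<^sup>-\<^sup>1T\<^sup>*T \<phi>\<close>, let \<open>p'\<close> be the same quantity for \<open>T'\<close> in place of \<open>T\<close>, and
  \<open>\<delta> = \<parallel>T'\<^sup>* - T\<^sup>*\<parallel>\<^sub>2\<^sub>,\<^sub>\<infinity>\<close>. The residual \<open>g = \<phi> - p\<close> solves \<open>\<alpha>g + T\<^sup>*Tg = \<alpha>\<phi>\<close>, and the
  source condition gives \<open>|\<langle>\<phi>, u\<rangle>| \<le> K\<parallel>Tu\<parallel>\<close>; testing the equation against \<open>g\<close> yields
  \<open>\<parallel>Tg\<parallel> \<le> \<alpha>K\<close> and \<open>\<parallel>g\<parallel> \<le> \<surd>\<alpha> K\<close>. The difference \<open>e = p' - p\<close> solves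
  \<open>\<alpha>e + T'\<^sup>*T'e = (T'\<^sup>*T' - T\<^sup>*T)g\<close>; testing against \<open>e\<close> and splitting \<open>T' = T + (T' - T)\<close>
  gives \<open>\<parallel>T'e\<parallel> = O(\<delta>)\<close>, and reading the equation pointwise with the \<open>(2,\<infinity>)\<close>-bounds gives
  \<open>\<parallel>e\<parallel>\<^sub>\<infinity> \<le> K'(\<delta> + \<delta>\<^sup>2)/\<surd>\<alpha>\<close>. Finally \<open>E \<delta> \<le> (E(\<delta>\<^sup>2))\<^sup>1\<^sup>/\<^sup>2\<close> and
  \<open>E(\<delta>\<^sup>2) \<le> B\<^sup>1\<^sup>/\<^sup>2 (E(\<delta>\<^sup>2))\<^sup>1\<^sup>/\<^sup>2\<close> turn this into the rate \<open>(E(\<delta>\<^sup>2)/\<alpha>)\<^sup>1\<^sup>/\<^sup>2\<close>.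

  Since the regularised inverse is a definite description, one first shows that
  \<open>\<alpha>g + T\<^sup>*Tg = h\<close> has exactly one continuous solution on the cube: existence by a Picard
  iteration that contracts in \<open>L\<^sub>2\<close> and converges uniformly, uniqueness by the same energy identity.
\<close>

lemma sqint_imp_integrable:
  fixes S :: "'a::euclidean_space set"
  assumes "compact S" "sqint S f" shows "integrable (lebesgue_on S) f"
proof -
  interpret finite_measure "lebesgue_on S" using finite_measure_lebesgue_on[OF lmeasurable_compact[OF assms(1)]] .
  have "f \<in> borel_measurable (lebesgue_on S)" "integrable (lebesgue_on S) (\<lambda>x. (f x)^2)"
    using assms(2) unfolding sqint_def by auto
  then show ?thesis by (rule square_integrable_imp_integrable)
qed

lemma integrable_mult_sqint:
  fixes S :: "'a::euclidean_space set"
  assumes "sqint S f" "sqint S g" shows "integrable (lebesgue_on S) (\<lambda>x. f x * g x)"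
proof -
  have i: "integrable (lebesgue_on S) (\<lambda>x. (f x)\<^sup>2 + (g x)\<^sup>2)"
    using assms unfolding sqint_def by auto
  have m: "(\<lambda>x. f x * g x) \<in> borel_measurable (lebesgue_on S)"
    using assms unfolding sqint_def by auto
  have a: "AE x in lebesgue_on S. norm (f x * g x) \<le> norm ((f x)\<^sup>2 + (g x)\<^sup>2)"
  proof (rule AE_I2)
    fix x
    have "2 * \<bar>f x\<bar> * \<bar>g x\<bar> \<le> (f x)\<^sup>2 + (g x)\<^sup>2"
      using sum_squares_bound[of "\<bar>f x\<bar>" "\<bar>g x\<bar>"] by simp
    moreover have "0 \<le> \<bar>f x\<bar> * \<bar>g x\<bar>" by simp
    ultimately have "\<bar>f x\<bar> * \<bar>g x\<bar> \<le> (f x)\<^sup>2 + (g x)\<^sup>2" by linarith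
    then show "norm (f x * g x) \<le> norm ((f x)\<^sup>2 + (g x)\<^sup>2)"
      by (simp add: abs_mult)
  qed
  show ?thesis by (rule Bochner_Integration.integrable_bound[OF i m a])
qed

lemma sqint_add: "sqint S f \<Longrightarrow> sqint S g \<Longrightarrow> sqint S (\<lambda>x. f x + g x)"
  unfolding sqint_def
  using integrable_mult_sqint[of S f g] unfolding sqint_def power2_sum
  by (auto simp: mult.assoc intro!: Bochner_Integration.integrable_add)

lemma sqint_cmult: "sqint S f \<Longrightarrow> sqint S (\<lambda>x. c * f x)"
  unfolding sqint_def by (auto simp: power_mult_distrib)

lemma sqint_uminus: "sqint S f \<Longrightarrow> sqint S (\<lambda>x. - f x)"
  using sqint_cmult[of S f "-1"] by simp

lemma sqint_diff: "sqint S f \<Longrightarrow> sqint S g \<Longrightarrow> sqint S (\<lambda>x. f x - g x)"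
  using sqint_add[of S f "\<lambda>x. - g x"] sqint_uminus[of S g] by simp

lemma sqint_zero: "sqint S (\<lambda>x. 0)"
  unfolding sqint_def by auto

lemma sqint_sum: "finite J \<Longrightarrow> (\<And>j. j \<in> J \<Longrightarrow> sqint S (f j)) \<Longrightarrow> sqint S (\<lambda>x. \<Sum>j\<in>J. f j x)"
  by (induction J rule: finite_induct) (auto intro: sqint_add sqint_zero)

lemma sqint_cong: "sqint S f \<Longrightarrow> (\<And>x. x \<in> S \<Longrightarrow> f x = g x) \<Longrightarrow> sqint S g"
proof -
  assume a: "sqint S f" and e: "\<And>x. x \<in> S \<Longrightarrow> f x = g x"
  have e': "\<And>x. x \<in> space (lebesgue_on S) \<Longrightarrow> f x = g x" using e by simp
  show ?thesis using a unfolding sqint_def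
    using measurable_cong[of "lebesgue_on S" f g, OF e'] Bochner_Integration.integrable_cong[of "lebesgue_on S" "lebesgue_on S" "\<lambda>x. (f x)^2" "\<lambda>x. (g x)^2"] e'
    by auto
qed

lemma compact_in_sets_lebesgue: "compact (S::'a::euclidean_space set) \<Longrightarrow> S \<in> sets lebesgue"
  using lmeasurable_compact[of S] by (auto simp: fmeasurable_def)

lemma continuous_on_imp_measurable_on:
  fixes S :: "'a::euclidean_space set"
  assumes "compact S" "continuous_on S f" shows "f \<in> borel_measurable (lebesgue_on S)"
  using assms compact_in_sets_lebesgue[of S] by (intro continuous_imp_measurable_on_sets_lebesgue) auto

lemma continuous_on_compact_abs_bounded:
  fixes S :: "'a::euclidean_space set" and f :: "'a \<Rightarrow> real"
  assumes "compact S" "continuous_on S f" shows "\<exists>B. \<forall>x\<in>S. \<bar>f x\<bar> \<le> B"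
proof -
  have "bounded (f ` S)" using assms compact_continuous_image compact_imp_bounded by blast
  then show ?thesis unfolding bounded_iff by auto
qed

lemma continuous_on_compact_integrable:
  fixes S :: "'a::euclidean_space set" and f :: "'a \<Rightarrow> real"
  assumes "compact S" "continuous_on S f" shows "integrable (lebesgue_on S) f"
proof -
  interpret finite_measure "lebesgue_on S" using finite_measure_lebesgue_on[OF lmeasurable_compact[OF assms(1)]] .
  obtain B where B: "\<forall>x\<in>S. \<bar>f x\<bar> \<le> B" using continuous_on_compact_abs_bounded[OF assms] by blast
  show ?thesis
    by (rule integrable_const_bound[where B=B]) (use B continuous_on_imp_measurable_on[OF assms] in auto)
qed

lemma continuous_on_compact_sqint:
  fixes S :: "'a::euclidean_space set"
  assumes "compact S" "continuous_on S f" shows "sqint S f"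
proof -
  have m: "f \<in> borel_measurable (lebesgue_on S)"
    using continuous_on_imp_measurable_on[OF assms] .
  have "continuous_on S (\<lambda>x. (f x)^2)" using assms(2) by (intro continuous_intros)
  then have "integrable (lebesgue_on S) (\<lambda>x. (f x)^2)"
    using assms(1) by (intro continuous_on_compact_integrable) auto
  with m show ?thesis unfolding sqint_def by auto
qed

lemma sigma_finite_lebesgue_on:
  fixes S :: "'a::euclidean_space set"
  assumes "compact S" shows "sigma_finite_measure (lebesgue_on S)"
proof -
  interpret finite_measure "lebesgue_on S" using finite_measure_lebesgue_on[OF lmeasurable_compact[OF assms]] .
  show ?thesis by unfold_locales
qed

lemma integrable_bounded_mult:
  fixes v g :: "'a \<Rightarrow> real"
  assumes v: "integrable M v" and g: "g \<in> borel_measurable M" and B: "\<And>x. x \<in> space M \<Longrightarrow> \<bar>g x\<bar> \<le> B"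
  shows "integrable M (\<lambda>x. g x * v x)"
proof -
  have i: "integrable M (\<lambda>x. B * v x)" using v by simp
  have m: "(\<lambda>x. g x * v x) \<in> borel_measurable M" using v g by (simp add: borel_measurable_integrable)
  have "AE x in M. norm (g x * v x) \<le> norm (B * v x)"
  proof (rule AE_I2)
    fix x assume x: "x \<in> space M"
    have "\<bar>g x\<bar> * \<bar>v x\<bar> \<le> \<bar>B\<bar> * \<bar>v x\<bar>"
      using B[OF x] by (intro mult_right_mono) auto
    then show "norm (g x * v x) \<le> norm (B * v x)" by (simp add: abs_mult)
  qed
  then show ?thesis by (rule Bochner_Integration.integrable_bound[OF i m])
qed

lemma integrable_pair_measure_mult:
  fixes f :: "'a \<Rightarrow> real" and g :: "'b \<Rightarrow> real"
  assumes M1: "sigma_finite_measure M1" and M2: "sigma_finite_measure M2"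
    and f: "integrable M1 f" and g: "integrable M2 g"
  shows "integrable (M1 \<Otimes>\<^sub>M M2) (\<lambda>p. f (fst p) * g (snd p))"
proof -
  interpret M2: sigma_finite_measure M2 by (rule M2)
  have fm[measurable]: "f \<in> borel_measurable M1" using f by (rule borel_measurable_integrable)
  have gm[measurable]: "g \<in> borel_measurable M2" using g by (rule borel_measurable_integrable)
  have m: "(\<lambda>p. f (fst p) * g (snd p)) \<in> borel_measurable (M1 \<Otimes>\<^sub>M M2)" by measurable
  have "(\<integral>\<^sup>+p. ennreal (norm (f (fst p) * g (snd p))) \<partial>(M1 \<Otimes>\<^sub>M M2))
      = (\<integral>\<^sup>+x. \<integral>\<^sup>+y. ennreal (norm (f (fst (x,y)) * g (snd (x,y)))) \<partial>M2 \<partial>M1)"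
    by (rule M2.nn_integral_fst[symmetric]) measurable
  also have "\<dots> = (\<integral>\<^sup>+x. ennreal (norm (f x)) * (\<integral>\<^sup>+y. ennreal (norm (g y)) \<partial>M2) \<partial>M1)"
    by (simp add: abs_mult ennreal_mult nn_integral_cmult)
  also have "\<dots> = (\<integral>\<^sup>+x. ennreal (norm (f x)) \<partial>M1) * (\<integral>\<^sup>+y. ennreal (norm (g y)) \<partial>M2)"
    by (simp add: nn_integral_multc)
  also have "\<dots> < \<infinity>"
    using f g unfolding integrable_iff_bounded by (simp add: ennreal_mult_less_top)
  finally show ?thesis using m unfolding integrable_iff_bounded by simp
qed

lemma ip_comm: "ip S f g = ip S g f"
  unfolding ip_def by (simp add: mult.commute)

lemma L2norm_nonneg: "0 \<le> L2norm S f"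
  unfolding L2norm_def by simp

lemma ip_self_nonneg: "0 \<le> ip S f f"
  unfolding ip_def by (simp add: integral_nonneg)

lemma L2norm_sq: "(L2norm S f)^2 = ip S f f"
  unfolding L2norm_def ip_def
  by (simp add: power2_eq_square integral_nonneg)

lemma L2norm_eq_sqrt: "L2norm S f = sqrt (ip S f f)"
  unfolding L2norm_def ip_def by (simp add: power2_eq_square)

lemma ip_add_left: "sqint S f \<Longrightarrow> sqint S g \<Longrightarrow> sqint S h \<Longrightarrow>
   ip S (\<lambda>x. f x + g x) h = ip S f h + ip S g h"
  unfolding ip_def using integrable_mult_sqint[of S f h] integrable_mult_sqint[of S g h]
  by (simp add: distrib_right)

lemma ip_diff_left: "sqint S f \<Longrightarrow> sqint S g \<Longrightarrow> sqint S h \<Longrightarrow>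
   ip S (\<lambda>x. f x - g x) h = ip S f h - ip S g h"
  unfolding ip_def using integrable_mult_sqint[of S f h] integrable_mult_sqint[of S g h]
  by (simp add: left_diff_distrib)

lemma ip_cmult_left: "ip S (\<lambda>x. c * f x) h = c * ip S f h"
  unfolding ip_def by (simp add: mult.assoc)

lemma ip_diff_right: "sqint S f \<Longrightarrow> sqint S g \<Longrightarrow> sqint S h \<Longrightarrow>
   ip S h (\<lambda>x. f x - g x) = ip S h f - ip S h g"
  using ip_diff_left[of S f g h] by (simp add: ip_comm)

lemma ip_cmult_right: "ip S h (\<lambda>x. c * f x) = c * ip S h f"
  using ip_cmult_left[of S c f h] by (simp add: ip_comm)

lemma ip_sum_left: "finite J \<Longrightarrow> (\<And>j. j \<in> J \<Longrightarrow> sqint S (f j)) \<Longrightarrow> sqint S h \<Longrightarrow>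
   ip S (\<lambda>x. \<Sum>j\<in>J. f j x) h = (\<Sum>j\<in>J. ip S (f j) h)"
  unfolding ip_def using integrable_mult_sqint[of S _ h]
  by (simp add: sum_distrib_right)

lemma ip_sum_right: "finite J \<Longrightarrow> (\<And>j. j \<in> J \<Longrightarrow> sqint S (f j)) \<Longrightarrow> sqint S h \<Longrightarrow>
   ip S h (\<lambda>x. \<Sum>j\<in>J. f j x) = (\<Sum>j\<in>J. ip S h (f j))"
  using ip_sum_left[of J S f h] by (simp add: ip_comm)

lemma ip_cong: "(\<And>x. x \<in> S \<Longrightarrow> f x = f' x) \<Longrightarrow> (\<And>x. x \<in> S \<Longrightarrow> g x = g' x) \<Longrightarrow>
   ip S f g = ip S f' g'"
  unfolding ip_def by (intro Bochner_Integration.integral_cong) auto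

lemma L2norm_cong: "(\<And>x. x \<in> S \<Longrightarrow> f x = f' x) \<Longrightarrow> L2norm S f = L2norm S f'"
  unfolding L2norm_eq_sqrt using ip_cong[of S f f' f f'] by simp

lemma L2norm_divide:
  assumes "n > 0" shows "L2norm S (\<lambda>x. f x / n) = L2norm S f / n"
proof -
  have "L2norm S (\<lambda>x. f x / n) = sqrt ((\<integral>x. (f x)^2 \<partial>lebesgue_on S) / n^2)"
    unfolding L2norm_def by (simp add: power_divide)
  also have "\<dots> = L2norm S f / n" using assms by (simp add: L2norm_def real_sqrt_divide)
  finally show ?thesis .
qed

lemma quadratic_nonneg_discriminant:
  fixes A B X :: real
  assumes A: "0 \<le> A" and B: "0 \<le> B" and q: "\<And>t. 0 \<le> A - 2 * t * X + t^2 * B"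
  shows "X^2 \<le> A * B"
proof (cases "B = 0")
  case True
  have "X = 0"
  proof (rule ccontr)
    assume "X \<noteq> 0"
    have "0 \<le> A - 2 * ((A + 1) / (2 * X)) * X + ((A + 1) / (2 * X))^2 * B" by (rule q)
    also have "\<dots> = A - (A + 1)" using True \<open>X \<noteq> 0\<close> by (simp add: field_simps)
    finally show False by simp
  qed
  then show ?thesis using A B by simp
next
  case False
  then have Bp: "B > 0" using B by simp
  have "0 \<le> A - 2 * (X / B) * X + (X / B)^2 * B" by (rule q)
  also have "\<dots> = A - X^2 / B" using Bp by (simp add: field_simps power2_eq_square)
  finally have "X^2 / B \<le> A" by simp
  then show ?thesis using Bp by (simp add: field_simps)
qed

lemma ip_Cauchy_Schwarz:
  assumes f: "sqint S f" and g: "sqint S g"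
  shows "\<bar>ip S f g\<bar> \<le> L2norm S f * L2norm S g"
proof -
  have q: "0 \<le> ip S f f - 2 * t * ip S f g + t^2 * ip S g g" for t
  proof -
    have "0 \<le> ip S (\<lambda>x. f x - t * g x) (\<lambda>x. f x - t * g x)" by (rule ip_self_nonneg)
    also have "\<dots> = ip S f f - 2 * t * ip S f g + t^2 * ip S g g"
      using f g sqint_cmult[OF g, of t]
      by (simp add: ip_diff_left ip_diff_right sqint_diff ip_cmult_left ip_cmult_right ip_comm[of S g f]
          power2_eq_square algebra_simps)
    finally show ?thesis .
  qed
  have "(ip S f g)^2 \<le> ip S f f * ip S g g"
    by (rule quadratic_nonneg_discriminant[OF ip_self_nonneg ip_self_nonneg q])
  then have "sqrt ((ip S f g)^2) \<le> sqrt (ip S f f * ip S g g)" by (rule real_sqrt_le_mono)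
  then show ?thesis by (simp add: L2norm_eq_sqrt real_sqrt_mult)
qed

lemma L2norm_eq_0_AE:
  assumes "sqint S f" "L2norm S f = 0"
  shows "AE x in lebesgue_on S. f x = 0"
proof -
  have "integral\<^sup>L (lebesgue_on S) (\<lambda>x. (f x)^2) = 0"
    using assms(2) unfolding L2norm_def by (simp add: integral_nonneg)
  then have "AE x in lebesgue_on S. (f x)^2 = 0"
    using assms(1) unfolding sqint_def by (subst (asm) integral_nonneg_eq_0_iff_AE) auto
  then show ?thesis by auto
qed

lemma L1_le_L2norm:
  fixes S :: "'a::euclidean_space set"
  assumes S: "compact S" and f: "sqint S f"
  shows "(\<integral>x. \<bar>f x\<bar> \<partial>lebesgue_on S) \<le> sqrt (measure lebesgue S) * L2norm S f"
proof -
  have fa: "sqint S (\<lambda>x. \<bar>f x\<bar>)" using f unfolding sqint_def by auto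
  have one: "sqint S (\<lambda>x. 1)" by (rule continuous_on_compact_sqint[OF S]) simp
  have "(\<integral>x. \<bar>f x\<bar> \<partial>lebesgue_on S) = ip S (\<lambda>x. \<bar>f x\<bar>) (\<lambda>x. 1)" by (simp add: ip_def)
  also have "\<dots> \<le> \<bar>ip S (\<lambda>x. \<bar>f x\<bar>) (\<lambda>x. 1)\<bar>" by simp
  also have "\<dots> \<le> L2norm S (\<lambda>x. \<bar>f x\<bar>) * L2norm S (\<lambda>x. 1)" by (rule ip_Cauchy_Schwarz[OF fa one])
  also have "L2norm S (\<lambda>x. \<bar>f x\<bar>) = L2norm S f" by (simp add: L2norm_def)
  also have "L2norm S (\<lambda>x. 1) = sqrt (measure lebesgue S)"
    using compact_in_sets_lebesgue[OF S] by (simp add: L2norm_def measure_restrict_space)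
  finally show ?thesis by (simp add: mult.commute)
qed

lemma L2norm_le_sup:
  fixes S :: "'a::euclidean_space set"
  assumes S: "compact S" and f: "sqint S f" and B: "\<And>x. x \<in> S \<Longrightarrow> \<bar>f x\<bar> \<le> B"
  shows "L2norm S f \<le> sqrt (measure lebesgue S) * B"
proof (cases "S = {}")
  case True
  then show ?thesis by (simp add: L2norm_def)
next
  case False
  have B0: "0 \<le> B" using B False by (meson abs_ge_zero ex_in_conv order_trans)
  interpret finite_measure "lebesgue_on S" using finite_measure_lebesgue_on[OF lmeasurable_compact[OF S]] .
  have "(\<integral>x. (f x)^2 \<partial>lebesgue_on S) \<le> (\<integral>x. B^2 \<partial>lebesgue_on S)"
  proof (rule integral_mono)
    show "integrable (lebesgue_on S) (\<lambda>x. (f x)^2)" using f unfolding sqint_def by auto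
    show "integrable (lebesgue_on S) (\<lambda>x. B^2)" by simp
    fix x assume x: "x \<in> space (lebesgue_on S)"
    then have "\<bar>f x\<bar> \<le> B" using B by simp
    then show "(f x)^2 \<le> B^2" by (metis abs_ge_zero power2_abs power_mono)
  qed
  also have "\<dots> = B^2 * measure lebesgue S"
    using compact_in_sets_lebesgue[OF S] by (simp add: measure_restrict_space)
  finally have "L2norm S f \<le> sqrt (B^2 * measure lebesgue S)" unfolding L2norm_def
    by (rule real_sqrt_le_mono)
  also have "\<dots> = B * sqrt (measure lebesgue S)" using B0 by (simp add: real_sqrt_mult)
  finally show ?thesis by (simp add: mult.commute)
qed

lemma ip_abs_le_sup_L1:
  fixes S :: "'a::euclidean_space set"
  assumes f: "sqint S f" and u: "sqint S u" and B: "\<And>x. x \<in> S \<Longrightarrow> \<bar>f x\<bar> \<le> B" and S: "compact S"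
  shows "\<bar>ip S f u\<bar> \<le> B * (\<integral>x. \<bar>u x\<bar> \<partial>lebesgue_on S)"
proof -
  have "\<bar>ip S f u\<bar> \<le> (\<integral>x. B * \<bar>u x\<bar> \<partial>lebesgue_on S)"
    unfolding ip_def
  proof (rule integral_abs_bound_integral)
    show "integrable (lebesgue_on S) (\<lambda>x. f x * u x)" by (rule integrable_mult_sqint[OF f u])
    show "integrable (lebesgue_on S) (\<lambda>x. B * \<bar>u x\<bar>)" using sqint_imp_integrable[OF S u] by auto
    fix x assume "x \<in> space (lebesgue_on S)"
    then have "\<bar>f x\<bar> * \<bar>u x\<bar> \<le> B * \<bar>u x\<bar>" using B by (intro mult_right_mono) auto
    then show "\<bar>f x * u x\<bar> \<le> B * \<bar>u x\<bar>" by (simp add: abs_mult)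
  qed
  then show ?thesis by simp
qed

lemma Bessel_inequality_weighted:
  assumes J: "finite J" and f: "\<And>j. j \<in> J \<Longrightarrow> sqint S (f j)" and lam: "\<And>j. j \<in> J \<Longrightarrow> 0 < lam j"
    and orth: "\<And>i j. i \<in> J \<Longrightarrow> j \<in> J \<Longrightarrow> ip S (f i) (f j) = (if i = j then lam j else 0)"
    and v: "sqint S v"
  shows "(\<Sum>j\<in>J. (ip S v (f j))^2 / lam j) \<le> ip S v v"
proof -
  define c where "c = (\<lambda>j. ip S v (f j) / lam j)"
  define s where "s = (\<lambda>x. \<Sum>j\<in>J. c j * f j x)"
  have fs: "\<And>j. j \<in> J \<Longrightarrow> sqint S (\<lambda>x. c j * f j x)" using f by (intro sqint_cmult) auto
  have ss: "sqint S s" unfolding s_def by (rule sqint_sum[OF J fs])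
  have ips_f: "ip S s (f i) = c i * lam i" if i: "i \<in> J" for i
  proof -
    have "ip S s (f i) = (\<Sum>j\<in>J. ip S (\<lambda>x. c j * f j x) (f i))"
      unfolding s_def by (rule ip_sum_left[OF J fs f[OF i]])
    also have "\<dots> = (\<Sum>j\<in>J. c j * (if j = i then lam i else 0))"
      by (intro sum.cong refl) (simp add: ip_cmult_left orth i)
    also have "\<dots> = c i * lam i" using J i by (simp add: if_distrib sum.delta cong: if_cong)
    finally show ?thesis .
  qed
  have ivs: "ip S v s = (\<Sum>j\<in>J. (ip S v (f j))^2 / lam j)"
  proof -
    have "ip S v s = (\<Sum>j\<in>J. ip S v (\<lambda>x. c j * f j x))" unfolding s_def by (rule ip_sum_right[OF J fs v])
    also have "\<dots> = (\<Sum>j\<in>J. (ip S v (f j))^2 / lam j)"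
      by (intro sum.cong refl) (simp only: ip_cmult_right, simp add: c_def power2_eq_square)
    finally show ?thesis .
  qed
  have iss: "ip S s s = (\<Sum>j\<in>J. (ip S v (f j))^2 / lam j)"
  proof -
    have "ip S s s = ip S s (\<lambda>x. \<Sum>j\<in>J. c j * f j x)" by (simp add: s_def)
    also have "\<dots> = (\<Sum>j\<in>J. ip S s (\<lambda>x. c j * f j x))" by (rule ip_sum_right[OF J fs ss])
    also have "\<dots> = (\<Sum>j\<in>J. c j * (c j * lam j))"
      by (intro sum.cong refl) (simp add: ip_cmult_right ips_f)
    also have "\<dots> = (\<Sum>j\<in>J. (ip S v (f j))^2 / lam j)"
      using lam by (intro sum.cong refl) (simp add: c_def power2_eq_square field_simps)
    finally show ?thesis .
  qed
  have "0 \<le> ip S (\<lambda>x. v x - s x) (\<lambda>x. v x - s x)" by (rule ip_self_nonneg)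
  also have "\<dots> = ip S v v - 2 * ip S v s + ip S s s"
    using v ss by (simp add: ip_diff_left ip_diff_right sqint_diff ip_comm[of S s v] algebra_simps)
  finally show ?thesis using ivs iss by simp
qed

lemma Bessel_Cauchy_Schwarz:
  assumes J: "finite J" and f: "\<And>j. j \<in> J \<Longrightarrow> sqint S (f j)" and lam: "\<And>j. j \<in> J \<Longrightarrow> 0 < lam j"
    and orth: "\<And>i j. i \<in> J \<Longrightarrow> j \<in> J \<Longrightarrow> ip S (f i) (f j) = (if i = j then lam j else 0)"
    and v: "sqint S v" and w: "sqint S w"
  shows "(\<Sum>j\<in>J. \<bar>ip S v (f j)\<bar> * \<bar>ip S w (f j)\<bar> / lam j) \<le> L2norm S v * L2norm S w"
proof -
  let ?x = "\<lambda>j. \<bar>ip S v (f j)\<bar> / sqrt (lam j)" and ?y = "\<lambda>j. \<bar>ip S w (f j)\<bar> / sqrt (lam j)"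
  have sq: "(\<Sum>j\<in>J. (\<bar>ip S u (f j)\<bar> / sqrt (lam j))^2) = (\<Sum>j\<in>J. (ip S u (f j))^2 / lam j)" for u
    using lam by (intro sum.cong refl) (simp add: power_divide less_imp_le)
  have "(\<Sum>j\<in>J. \<bar>ip S v (f j)\<bar> * \<bar>ip S w (f j)\<bar> / lam j) = (\<Sum>j\<in>J. ?x j * ?y j)"
    using lam by (intro sum.cong refl) (simp add: less_imp_le flip: real_sqrt_mult)
  moreover have "(\<Sum>j\<in>J. ?x j * ?y j)^2 \<le> (\<Sum>j\<in>J. (?x j)^2) * (\<Sum>j\<in>J. (?y j)^2)"
    by (rule Cauchy_Schwarz_ineq_sum)
  moreover have "\<dots> \<le> ip S v v * ip S w w"
    unfolding sq using Bessel_inequality_weighted[OF J f lam orth] v w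
    by (intro mult_mono) (auto intro: sum_nonneg simp: less_imp_le lam ip_self_nonneg)
  ultimately have "(\<Sum>j\<in>J. \<bar>ip S v (f j)\<bar> * \<bar>ip S w (f j)\<bar> / lam j)^2 \<le> (L2norm S v * L2norm S w)^2"
    by (simp add: L2norm_sq power_mult_distrib)
  then show ?thesis by (rule power2_le_imp_le) (simp add: L2norm_nonneg)
qed

lemma cube_cbox: "cube a b = cbox ((\<chi> i. a)::real^'n) (\<chi> i. b)"
  by (auto simp: cube_def mem_box_cart)

lemma compact_cube: "compact (cube a b :: (real^'n) set)"
  by (simp add: cube_cbox)

lemma box_cube_nonempty:
  assumes "a < b" shows "box ((\<chi> i. a)::real^'n) (\<chi> i. b) \<noteq> {}"
proof -
  have "((\<chi> i. (a + b) / 2)::real^'n) \<in> box (\<chi> i. a) (\<chi> i. b)"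
    using assms by (auto simp: mem_box_cart)
  then show ?thesis by auto
qed

lemma measure_cube_pos:
  assumes "a < b" shows "0 < measure lebesgue (cube a b :: (real^'n) set)"
proof -
  have "((\<chi> i. a)::real^'n) \<in> cbox ((\<chi> i. a)::real^'n) (\<chi> i. b)"
    using assms by (simp add: mem_box_cart)
  then have ne: "cbox ((\<chi> i. a)::real^'n) (\<chi> i. b) \<noteq> {}" by blast
  have "measure lebesgue (cube a b :: (real^'n) set) = Henstock_Kurzweil_Integration.content (cbox ((\<chi> i. a)::real^'n) (\<chi> i. b))"
    by (simp add: cube_cbox measure_completion)
  also have "\<dots> = (\<Prod>i\<in>(UNIV::'n set). b - a)" using content_cbox_cart[OF ne] by simp
  also have "\<dots> > 0" using assms by (intro prod_pos) auto
  finally show ?thesis .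
qed

lemma continuous_L2norm_eq_0:
  fixes f :: "real^'n \<Rightarrow> real"
  assumes ab: "a < b" and f: "continuous_on (cube a b) f" and z: "L2norm (cube a b) f = 0"
    and x: "x \<in> cube a b"
  shows "f x = 0"
proof -
  have "integrable (lebesgue_on (cube a b)) (\<lambda>x. (f x)^2)"
    using continuous_on_compact_sqint[OF compact_cube f] unfolding sqint_def by simp
  moreover have "integral\<^sup>L (lebesgue_on (cube a b)) (\<lambda>x. (f x)^2) = 0"
    using z unfolding L2norm_def by (simp add: integral_nonneg)
  ultimately have "((\<lambda>x. (f x)^2) has_integral 0) (cube a b)"
    using has_integral_integral_lebesgue_on[of "cube a b" "\<lambda>x. (f x)^2"]
      compact_in_sets_lebesgue[OF compact_cube] by metis
  moreover have "continuous_on (cube a b) (\<lambda>x. (f x)^2)" using f by (intro continuous_intros)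
  ultimately have "(f x)^2 = 0"
    using has_integral_0_cbox_imp_0[of "\<chi> i. a" "\<chi> i. b" "\<lambda>x. (f x)^2" x, folded cube_cbox]
      box_cube_nonempty[OF ab] x by simp
  then show ?thesis by simp
qed

definition clamp_cube :: "real \<Rightarrow> real \<Rightarrow> real^'n \<Rightarrow> real^'n" where
  "clamp_cube a b x = (\<chi> i. max a (min b (x$i)))"

lemma clamp_cube_in: "a \<le> b \<Longrightarrow> clamp_cube a b x \<in> cube a b"
  by (auto simp: clamp_cube_def cube_def)

lemma clamp_cube_id: "x \<in> cube a b \<Longrightarrow> clamp_cube a b x = x"
  by (auto simp: clamp_cube_def cube_def vec_eq_iff)

lemma continuous_clamp_cube: "continuous_on UNIV (clamp_cube a b :: real^'n \<Rightarrow> real^'n)"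
  unfolding clamp_cube_def by (intro continuous_intros)

lemma measurable_id_lebesgue_on_borel: "(\<lambda>x. x) \<in> measurable (lebesgue_on S) borel"
  by (intro measurable_restrict_space1 measurable_completion) simp

text \<open>Composing with the retraction \<open>clamp_cube\<close> extends a kernel continuous on the cube to a
  continuous function on the whole space, which is Borel for the product of the Borel algebras.\<close>

lemma cont_kernel_measurable:
  fixes k :: "real^'q \<Rightarrow> real^'p \<Rightarrow> real"
  assumes ab: "a \<le> b" and k: "cont_kernel (cube a b) (cube a b) k"
  shows "(\<lambda>(w,z). k w z) \<in> borel_measurable (lebesgue_on (cube a b) \<Otimes>\<^sub>M lebesgue_on (cube a b))"
proof -
  define kx where "kx = (\<lambda>(p::(real^'q) \<times> (real^'p)). k (clamp_cube a b (fst p)) (clamp_cube a b (snd p)))"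
  have "continuous_on UNIV kx"
  proof -
    have c1: "continuous_on UNIV (\<lambda>p::(real^'q) \<times> (real^'p). (clamp_cube a b (fst p), clamp_cube a b (snd p)))"
      by (intro continuous_intros continuous_on_compose2[OF continuous_clamp_cube]) auto
    have "continuous_on UNIV ((\<lambda>(w,z). k w z) \<circ> (\<lambda>p::(real^'q) \<times> (real^'p). (clamp_cube a b (fst p), clamp_cube a b (snd p))))"
    proof (rule continuous_on_compose[OF c1])
      have "range (\<lambda>p::(real^'q) \<times> (real^'p). (clamp_cube a b (fst p), clamp_cube a b (snd p))) \<subseteq> cube a b \<times> cube a b"
      proof -
        have "\<And>x::real^'q. clamp_cube a b x \<in> cube a b" "\<And>x::real^'p. clamp_cube a b x \<in> cube a b"
          using ab by (auto intro: clamp_cube_in)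
        then show ?thesis by auto
      qed
      then show "continuous_on (range (\<lambda>p::(real^'q) \<times> (real^'p). (clamp_cube a b (fst p), clamp_cube a b (snd p)))) (\<lambda>(w,z). k w z)"
        using k unfolding cont_kernel_def by (rule continuous_on_subset[rotated])
    qed
    then show ?thesis by (simp add: kx_def o_def)
  qed
  then have "kx \<in> borel_measurable borel" by (rule borel_measurable_continuous_onI)
  then have m1: "kx \<in> borel_measurable (borel \<Otimes>\<^sub>M borel)" by (simp add: borel_prod)
  have m2: "(\<lambda>p. (fst p, snd p)) \<in> measurable (lebesgue_on (cube a b) \<Otimes>\<^sub>M lebesgue_on (cube a b)) (borel \<Otimes>\<^sub>M borel)"
    by (intro measurable_Pair measurable_compose[OF measurable_fst measurable_id_lebesgue_on_borel]
        measurable_compose[OF measurable_snd measurable_id_lebesgue_on_borel])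
  have "kx \<in> borel_measurable (lebesgue_on (cube a b) \<Otimes>\<^sub>M lebesgue_on (cube a b))"
    using measurable_compose[OF m2 m1] by simp
  moreover have "\<And>p. p \<in> space (lebesgue_on (cube a b) \<Otimes>\<^sub>M lebesgue_on (cube a b)) \<Longrightarrow> kx p = (\<lambda>(w,z). k w z) p"
    by (auto simp: kx_def space_pair_measure clamp_cube_id)
  ultimately show ?thesis using measurable_cong by blast
qed

lemma cont_kernel_bounded:
  fixes k :: "'q::euclidean_space \<Rightarrow> 'p::euclidean_space \<Rightarrow> real"
  assumes "compact Q" "compact P" "cont_kernel Q P k"
  shows "\<exists>M. 0 \<le> M \<and> (\<forall>w\<in>Q. \<forall>z\<in>P. \<bar>k w z\<bar> \<le> M)"
proof -
  obtain B where B: "\<forall>x\<in>Q \<times> P. \<bar>(\<lambda>(w,z). k w z) x\<bar> \<le> B"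
    using continuous_on_compact_abs_bounded[of "Q \<times> P" "\<lambda>(w,z). k w z"] assms
    by (auto simp: cont_kernel_def compact_Times)
  show ?thesis by (rule exI[of _ "max B 0"]) (use B in force)
qed

lemma cont_kernel_continuous_slice:
  fixes k :: "'q::euclidean_space \<Rightarrow> 'p::euclidean_space \<Rightarrow> real"
  assumes "cont_kernel Q P k" "z \<in> P"
  shows "continuous_on Q (\<lambda>w. k w z)"
proof -
  have "continuous_on Q ((\<lambda>(w,z). k w z) \<circ> (\<lambda>w. (w, z)))"
    by (rule continuous_on_compose) (use assms in \<open>auto simp: cont_kernel_def intro!: continuous_intros intro: continuous_on_subset\<close>)
  then show ?thesis by (simp add: o_def)
qed

lemma cont_kernel_integrable_mult:
  fixes k :: "'q::euclidean_space \<Rightarrow> 'p::euclidean_space \<Rightarrow> real"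
  assumes "compact Q" "compact P" "cont_kernel Q P k" "z \<in> P" "integrable (lebesgue_on Q) v"
  shows "integrable (lebesgue_on Q) (\<lambda>w. k w z * v w)"
proof -
  obtain M where M: "\<forall>w\<in>Q. \<forall>z\<in>P. \<bar>k w z\<bar> \<le> M" using cont_kernel_bounded[OF assms(1-3)] by blast
  have c: "continuous_on Q (\<lambda>w. k w z)" using cont_kernel_continuous_slice[OF assms(3,4)] .
  show ?thesis
    by (rule integrable_bounded_mult[where B=M]) (use assms M continuous_on_imp_measurable_on[OF assms(1) c] in auto)
qed

lemma cont_kernel_diff:
  "cont_kernel Q P kh \<Longrightarrow> cont_kernel Q P k \<Longrightarrow> cont_kernel Q P (\<lambda>w z. kh w z - k w z)"
  unfolding cont_kernel_def by (simp add: case_prod_beta continuous_on_diff)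

lemma Tadj_abs_le_L1:
  fixes k :: "'q::euclidean_space \<Rightarrow> 'p::euclidean_space \<Rightarrow> real"
  assumes "compact Q" "compact P" "cont_kernel Q P k" "z \<in> P" "integrable (lebesgue_on Q) v"
    and M: "\<forall>w\<in>Q. \<forall>z\<in>P. \<bar>k w z\<bar> \<le> M"
  shows "\<bar>Tadj Q k v z\<bar> \<le> M * (\<integral>w. \<bar>v w\<bar> \<partial>lebesgue_on Q)"
proof -
  have "\<bar>Tadj Q k v z\<bar> \<le> (\<integral>w. M * \<bar>v w\<bar> \<partial>lebesgue_on Q)"
    unfolding Tadj_def
  proof (rule integral_abs_bound_integral)
    show "integrable (lebesgue_on Q) (\<lambda>w. k w z * v w)" by (rule cont_kernel_integrable_mult[OF assms(1-5)])
    show "integrable (lebesgue_on Q) (\<lambda>w. M * \<bar>v w\<bar>)" using assms(5) by auto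
    fix w assume "w \<in> space (lebesgue_on Q)"
    then show "\<bar>k w z * v w\<bar> \<le> M * \<bar>v w\<bar>" using M assms(4)
      by (auto simp: abs_mult intro: mult_right_mono)
  qed
  then show ?thesis by simp
qed

lemma Tadj_continuous_on:
  fixes k :: "'q::euclidean_space \<Rightarrow> 'p::euclidean_space \<Rightarrow> real"
  assumes Q: "compact Q" and P: "compact P" and k: "cont_kernel Q P k" and v: "integrable (lebesgue_on Q) v"
  shows "continuous_on P (Tadj Q k v)"
  unfolding continuous_on_iff
proof (intro ballI allI impI)
  fix z :: 'p and e :: real
  assume z: "z \<in> P" and e: "0 < e"
  define N where "N = (\<integral>w. \<bar>v w\<bar> \<partial>lebesgue_on Q) + 1"
  have "0 \<le> (\<integral>w. \<bar>v w\<bar> \<partial>lebesgue_on Q)" by (rule Bochner_Integration.integral_nonneg) simp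
  then have N: "N > 0" unfolding N_def by linarith
  have uc: "uniformly_continuous_on (Q \<times> P) (\<lambda>(w,z). k w z)"
    using k Q P by (intro compact_uniformly_continuous) (auto simp: cont_kernel_def compact_Times)
  obtain d where d: "d > 0" "\<And>x x'. x \<in> Q \<times> P \<Longrightarrow> x' \<in> Q \<times> P \<Longrightarrow> dist x' x < d \<Longrightarrow>
      dist ((\<lambda>(w,z). k w z) x') ((\<lambda>(w,z). k w z) x) < e / N"
    using uc N e unfolding uniformly_continuous_on_def by (metis divide_pos_pos)
  show "\<exists>d>0. \<forall>z'\<in>P. dist z' z < d \<longrightarrow> dist (Tadj Q k v z') (Tadj Q k v z) < e"
  proof (intro exI[of _ d] conjI ballI impI)
    show "d > 0" by (rule d)
    fix z' assume z': "z' \<in> P" "dist z' z < d"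
    have kk: "\<bar>k w z' - k w z\<bar> \<le> e / N" if w: "w \<in> Q" for w
    proof -
      have "dist (w, z') (w, z) < d" using z' by (simp add: dist_Pair_Pair)
      then have "dist (k w z') (k w z) < e / N" using d(2)[of "(w,z)" "(w,z')"] w z z'(1) by auto
      then show ?thesis by (simp add: dist_real_def)
    qed
    have i1: "integrable (lebesgue_on Q) (\<lambda>w. k w z' * v w)" by (rule cont_kernel_integrable_mult[OF Q P k z'(1) v])
    have i2: "integrable (lebesgue_on Q) (\<lambda>w. k w z * v w)" by (rule cont_kernel_integrable_mult[OF Q P k z v])
    have "\<bar>Tadj Q k v z' - Tadj Q k v z\<bar> = \<bar>\<integral>w. (k w z' - k w z) * v w \<partial>lebesgue_on Q\<bar>"
      unfolding Tadj_def using i1 i2 by (simp add: left_diff_distrib)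
    also have "\<dots> \<le> (\<integral>w. e / N * \<bar>v w\<bar> \<partial>lebesgue_on Q)"
    proof (rule integral_abs_bound_integral)
      show "integrable (lebesgue_on Q) (\<lambda>w. (k w z' - k w z) * v w)"
        using i1 i2 by (simp add: left_diff_distrib)
      show "integrable (lebesgue_on Q) (\<lambda>w. e / N * \<bar>v w\<bar>)" using v by auto
      fix w assume "w \<in> space (lebesgue_on Q)"
      then have "\<bar>k w z' - k w z\<bar> * \<bar>v w\<bar> \<le> e / N * \<bar>v w\<bar>"
        using kk by (intro mult_right_mono) auto
      then show "\<bar>(k w z' - k w z) * v w\<bar> \<le> e / N * \<bar>v w\<bar>"
        by (simp add: abs_mult)
    qed
    also have "\<dots> = e / N * (N - 1)" by (simp add: N_def)
    also have "\<dots> < e" using N e by (simp add: field_simps)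
    finally show "dist (Tadj Q k v z') (Tadj Q k v z) < e" by (simp add: dist_real_def)
  qed
qed

definition swap_kernel :: "('q \<Rightarrow> 'p \<Rightarrow> real) \<Rightarrow> 'p \<Rightarrow> 'q \<Rightarrow> real" where
  "swap_kernel k = (\<lambda>z w. k w z)"

lemma Top_eq_Tadj_swap_kernel: "Top P k u = Tadj P (swap_kernel k) u"
  by (simp add: Top_def Tadj_def swap_kernel_def fun_eq_iff)

lemma cont_kernel_swap_kernel: "cont_kernel Q P k \<Longrightarrow> cont_kernel P Q (swap_kernel k)"
proof -
  assume k: "cont_kernel Q P k"
  have "continuous_on (P \<times> Q) ((\<lambda>(w,z). k w z) \<circ> (\<lambda>p. (snd p, fst p)))"
    by (rule continuous_on_compose) (use k in \<open>auto simp: cont_kernel_def intro!: continuous_intros intro: continuous_on_subset\<close>)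
  then show ?thesis by (simp add: cont_kernel_def swap_kernel_def o_def case_prod_beta)
qed

lemma ip_Tadj_eq_ip_Top:
  fixes k :: "real^'q \<Rightarrow> real^'p \<Rightarrow> real" and u :: "real^'p \<Rightarrow> real" and v :: "real^'q \<Rightarrow> real"
  assumes ab: "a \<le> b" and k: "cont_kernel (cube a b) (cube a b) k"
    and u: "sqint (cube a b) u" and v: "sqint (cube a b) v"
  shows "ip (cube a b) (Tadj (cube a b) k v) u = ip (cube a b) v (Top (cube a b) k u)"
proof -
  let ?Q = "cube a b :: (real^'q) set" and ?P = "cube a b :: (real^'p) set"
  let ?M1 = "lebesgue_on ?Q" and ?M2 = "lebesgue_on ?P"
  have Qc: "compact ?Q" and Pc: "compact ?P" by (rule compact_cube)+
  interpret pair_sigma_finite ?M1 ?M2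
    unfolding pair_sigma_finite_def using sigma_finite_lebesgue_on[OF Qc] sigma_finite_lebesgue_on[OF Pc] by auto
  have ui: "integrable ?M2 u" by (rule sqint_imp_integrable[OF Pc u])
  have vi: "integrable ?M1 v" by (rule sqint_imp_integrable[OF Qc v])
  obtain M where M: "\<forall>w\<in>?Q. \<forall>z\<in>?P. \<bar>k w z\<bar> \<le> M" using cont_kernel_bounded[OF Qc Pc k] by blast
  have km: "(\<lambda>(w,z). k w z) \<in> borel_measurable (?M1 \<Otimes>\<^sub>M ?M2)" by (rule cont_kernel_measurable[OF ab k])
  have int: "integrable (?M1 \<Otimes>\<^sub>M ?M2) (case_prod (\<lambda>w z. k w z * v w * u z))"
  proof -
    have pi: "integrable (?M1 \<Otimes>\<^sub>M ?M2) (\<lambda>p. v (fst p) * u (snd p))"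
      by (rule integrable_pair_measure_mult[OF sigma_finite_lebesgue_on[OF Qc] sigma_finite_lebesgue_on[OF Pc] vi ui])
    have "integrable (?M1 \<Otimes>\<^sub>M ?M2) (\<lambda>p. (\<lambda>(w,z). k w z) p * (v (fst p) * u (snd p)))"
    proof (rule integrable_bounded_mult[OF pi km, where B=M])
      fix p assume "p \<in> space (?M1 \<Otimes>\<^sub>M ?M2)"
      then show "\<bar>(\<lambda>(w,z). k w z) p\<bar> \<le> M" using M by (auto simp: space_pair_measure)
    qed
    moreover have "(\<lambda>p. (\<lambda>(w,z). k w z) p * (v (fst p) * u (snd p))) = case_prod (\<lambda>w z. k w z * v w * u z)"
      by (auto simp: fun_eq_iff mult.assoc)
    ultimately show ?thesis by simp
  qed
  have "ip ?P (Tadj ?Q k v) u = (\<integral>z. (\<integral>w. k w z * v w * u z \<partial>?M1) \<partial>?M2)"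
    unfolding ip_def Tadj_def by simp
  also have "\<dots> = (\<integral>w. (\<integral>z. k w z * v w * u z \<partial>?M2) \<partial>?M1)"
    by (rule Fubini_integral[OF int])
  also have "\<dots> = ip ?Q v (Top ?P k u)"
    unfolding ip_def Top_def
    by (intro Bochner_Integration.integral_cong refl) (simp add: mult.commute mult.left_commute flip: integral_mult_right_zero)
  finally show ?thesis .
qed

lemma supn_le: "(\<And>x. x \<in> S \<Longrightarrow> \<bar>f x\<bar> \<le> c) \<Longrightarrow> supn S f \<le> ennreal c"
  unfolding supn_def by (intro SUP_least ennreal_leI) auto

lemma supn_upper: "x \<in> S \<Longrightarrow> ennreal \<bar>f x\<bar> \<le> supn S f"
  unfolding supn_def by (rule SUP_upper)

lemma Tadj_abs_le_norm_2inf: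
  fixes k :: "'q::euclidean_space \<Rightarrow> 'p::euclidean_space \<Rightarrow> real"
  assumes N: "norm_2inf Q P k \<le> ennreal c" and c: "0 \<le> c" and v: "sqint Q v" and z: "z \<in> P"
  shows "\<bar>Tadj Q k v z\<bar> \<le> c * L2norm Q v"
proof (cases "L2norm Q v = 0")
  case True
  have "AE w in lebesgue_on Q. v w = 0" by (rule L2norm_eq_0_AE[OF v True])
  then have "AE w in lebesgue_on Q. k w z * v w = 0" by auto
  then have "Tadj Q k v z = 0" unfolding Tadj_def by (rule integral_eq_zero_AE)
  then show ?thesis using c by (simp add: L2norm_nonneg)
next
  case False
  define n where "n = L2norm Q v"
  have n: "n > 0" using False L2norm_nonneg[of Q v] by (simp add: n_def)
  define \<psi> where "\<psi> = (\<lambda>w. v w / n)"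
  have "sqint Q (\<lambda>w. (1/n) * v w)" by (rule sqint_cmult[OF v])
  then have \<psi>s: "sqint Q \<psi>" by (rule sqint_cong) (simp add: \<psi>_def)
  have \<psi>n: "L2norm Q \<psi> \<le> 1" using L2norm_divide[OF n, of Q v] n by (simp add: \<psi>_def n_def)
  have "supn P (Tadj Q k \<psi>) \<le> norm_2inf Q P k"
    unfolding norm_2inf_def by (rule SUP_upper) (use \<psi>s \<psi>n in auto)
  then have "ennreal \<bar>Tadj Q k \<psi> z\<bar> \<le> ennreal c" using supn_upper[OF z, of "Tadj Q k \<psi>"] N by simp
  then have le: "\<bar>Tadj Q k \<psi> z\<bar> \<le> c" using c by (simp add: ennreal_le_iff)
  have "Tadj Q k \<psi> z = Tadj Q k v z / n"
  proof -
    have "(\<lambda>w. k w z * (v w / n)) = (\<lambda>w. k w z * v w / n)" by simp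
    then show ?thesis unfolding Tadj_def \<psi>_def by (simp only: integral_divide_zero)
  qed
  then have "\<bar>Tadj Q k v z\<bar> / n \<le> c" using le n by simp
  then show ?thesis using n by (simp add: n_def field_simps)
qed

locale cube_kernel =
  fixes a b :: real and k :: "real^'q \<Rightarrow> real^'p \<Rightarrow> real"
  assumes ab: "a < b" and kc: "cont_kernel (cube a b) (cube a b) k"
begin

abbreviation "Sp \<equiv> (cube a b :: (real^'p) set)"

abbreviation "Sq \<equiv> (cube a b :: (real^'q) set)"

lemma compact_Sp: "compact Sp" by (rule compact_cube)

lemma compact_Sq: "compact Sq" by (rule compact_cube)

lemma Top_cont: "sqint Sp u \<Longrightarrow> continuous_on Sq (Top Sp k u)"
  unfolding Top_eq_Tadj_swap_kernel
  by (rule Tadj_continuous_on[OF compact_Sp compact_Sq cont_kernel_swap_kernel[OF kc] sqint_imp_integrable[OF compact_Sp]])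

lemma Tadj_cont: "sqint Sq v \<Longrightarrow> continuous_on Sp (Tadj Sq k v)"
  by (rule Tadj_continuous_on[OF compact_Sq compact_Sp kc sqint_imp_integrable[OF compact_Sq]])

lemma Top_sqint: "sqint Sp u \<Longrightarrow> sqint Sq (Top Sp k u)"
  by (rule continuous_on_compact_sqint[OF compact_Sq Top_cont])

lemma Tadj_sqint: "sqint Sq v \<Longrightarrow> sqint Sp (Tadj Sq k v)"
  by (rule continuous_on_compact_sqint[OF compact_Sp Tadj_cont])

lemma Top_integrable: "sqint Sp u \<Longrightarrow> w \<in> Sq \<Longrightarrow> integrable (lebesgue_on Sp) (\<lambda>z. k w z * u z)"
  using cont_kernel_integrable_mult[OF compact_Sp compact_Sq cont_kernel_swap_kernel[OF kc], of w u] sqint_imp_integrable[OF compact_Sp, of u]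
  by (simp add: swap_kernel_def)

lemma Tadj_integrable: "sqint Sq v \<Longrightarrow> z \<in> Sp \<Longrightarrow> integrable (lebesgue_on Sq) (\<lambda>w. k w z * v w)"
  using cont_kernel_integrable_mult[OF compact_Sq compact_Sp kc, of z v] sqint_imp_integrable[OF compact_Sq, of v] by simp

lemma Top_diff: "sqint Sp u1 \<Longrightarrow> sqint Sp u2 \<Longrightarrow> w \<in> Sq \<Longrightarrow>
   Top Sp k (\<lambda>x. u1 x - u2 x) w = Top Sp k u1 w - Top Sp k u2 w"
  unfolding Top_def using Top_integrable[of u1 w] Top_integrable[of u2 w] by (simp add: right_diff_distrib)

lemma Tadj_add: "sqint Sq u1 \<Longrightarrow> sqint Sq u2 \<Longrightarrow> z \<in> Sp \<Longrightarrow>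
   Tadj Sq k (\<lambda>x. u1 x + u2 x) z = Tadj Sq k u1 z + Tadj Sq k u2 z"
  unfolding Tadj_def using Tadj_integrable[of u1 z] Tadj_integrable[of u2 z] by (simp add: distrib_left)

lemma Tadj_diff: "sqint Sq u1 \<Longrightarrow> sqint Sq u2 \<Longrightarrow> z \<in> Sp \<Longrightarrow>
   Tadj Sq k (\<lambda>x. u1 x - u2 x) z = Tadj Sq k u1 z - Tadj Sq k u2 z"
  unfolding Tadj_def using Tadj_integrable[of u1 z] Tadj_integrable[of u2 z] by (simp add: right_diff_distrib)

lemma Top_cong: "(\<And>x. x \<in> Sp \<Longrightarrow> u x = u' x) \<Longrightarrow> Top Sp k u w = Top Sp k u' w"
  unfolding Top_def by (intro Bochner_Integration.integral_cong) auto

lemma Tadj_cong: "(\<And>x. x \<in> Sq \<Longrightarrow> u x = u' x) \<Longrightarrow> Tadj Sq k u z = Tadj Sq k u' z"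
  unfolding Tadj_def by (intro Bochner_Integration.integral_cong) auto

lemma ip_Tadj_Top: "sqint Sp u \<Longrightarrow> sqint Sq v \<Longrightarrow> ip Sp (Tadj Sq k v) u = ip Sq v (Top Sp k u)"
  using ip_Tadj_eq_ip_Top[OF less_imp_le[OF ab] kc] by blast

lemma ip_TsT_self: "sqint Sp g \<Longrightarrow> ip Sp (Tadj Sq k (Top Sp k g)) g = (L2norm Sq (Top Sp k g))^2"
  by (simp add: ip_Tadj_Top Top_sqint L2norm_sq)

lemma L2norm_Top_le:
  assumes N: "norm_2inf Sq Sp k \<le> ennreal c" and c: "0 \<le> c" and u: "sqint Sp u"
  shows "L2norm Sq (Top Sp k u) \<le> c * sqrt (measure lebesgue Sp) * L2norm Sp u"
proof -
  let ?t = "L2norm Sq (Top Sp k u)"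
  have "?t^2 = ip Sp (Tadj Sq k (Top Sp k u)) u" using ip_TsT_self[OF u] ip_Tadj_Top[OF u Top_sqint[OF u]]
    by (simp add: L2norm_sq)
  also have "\<dots> \<le> \<bar>ip Sp (Tadj Sq k (Top Sp k u)) u\<bar>" by simp
  also have "\<dots> \<le> (c * ?t) * (\<integral>x. \<bar>u x\<bar> \<partial>lebesgue_on Sp)"
    by (rule ip_abs_le_sup_L1[OF Tadj_sqint[OF Top_sqint[OF u]] u _ compact_Sp])
       (rule Tadj_abs_le_norm_2inf[OF N c Top_sqint[OF u]])
  also have "\<dots> \<le> (c * ?t) * (sqrt (measure lebesgue Sp) * L2norm Sp u)"
    by (intro mult_left_mono L1_le_L2norm[OF compact_Sp u]) (simp_all add: c L2norm_nonneg)
  finally have *: "?t * ?t \<le> ?t * (c * sqrt (measure lebesgue Sp) * L2norm Sp u)"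
    by (simp add: power2_eq_square mult_ac)
  show ?thesis
  proof (cases "?t = 0")
    case True then show ?thesis using c by (simp add: L2norm_nonneg)
  next
    case False
    then have "?t > 0" using L2norm_nonneg[of Sq "Top Sp k u"] by simp
    with * show ?thesis by simp
  qed
qed

abbreviation TsT :: "(real^'p \<Rightarrow> real) \<Rightarrow> real^'p \<Rightarrow> real" where
  "TsT g \<equiv> Tadj Sq k (Top Sp k g)"

lemma TsT_sqint: "sqint Sp u \<Longrightarrow> sqint Sp (TsT u)"
  by (intro Tadj_sqint Top_sqint)

lemma TsT_cont: "sqint Sp u \<Longrightarrow> continuous_on Sp (TsT u)"
  by (intro Tadj_cont Top_sqint)

lemma TsT_diff: "sqint Sp u1 \<Longrightarrow> sqint Sp u2 \<Longrightarrow> z \<in> Sp \<Longrightarrow>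
   TsT (\<lambda>x. u1 x - u2 x) z = TsT u1 z - TsT u2 z"
proof -
  assume u: "sqint Sp u1" "sqint Sp u2" "z \<in> Sp"
  have "TsT (\<lambda>x. u1 x - u2 x) z = Tadj Sq k (\<lambda>w. Top Sp k u1 w - Top Sp k u2 w) z"
    by (rule Tadj_cong) (simp add: Top_diff u)
  also have "\<dots> = TsT u1 z - TsT u2 z" by (rule Tadj_diff) (simp_all add: Top_sqint u)
  finally show ?thesis .
qed

lemma TsT_cong: "(\<And>x. x \<in> Sp \<Longrightarrow> u x = u' x) \<Longrightarrow> TsT u z = TsT u' z"
proof -
  assume e: "\<And>x. x \<in> Sp \<Longrightarrow> u x = u' x"
  have "Top Sp k u = Top Sp k u'" by (rule ext, rule Top_cong) (rule e)
  then show ?thesis by simp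
qed

lemma norm_2inf_finite: "\<exists>c\<ge>0. norm_2inf Sq Sp k \<le> ennreal c"
proof -
  obtain M where M: "0 \<le> M" "\<forall>w\<in>Sq. \<forall>z\<in>Sp. \<bar>k w z\<bar> \<le> M" using cont_kernel_bounded[OF compact_Sq compact_Sp kc] by blast
  let ?c = "M * sqrt (measure lebesgue Sq)"
  have "norm_2inf Sq Sp k \<le> ennreal ?c"
    unfolding norm_2inf_def
  proof (rule SUP_least, rule supn_le)
    fix \<psi> z assume \<psi>: "\<psi> \<in> {\<psi>. sqint Sq \<psi> \<and> L2norm Sq \<psi> \<le> 1}" and z: "z \<in> Sp"
    have "\<bar>Tadj Sq k \<psi> z\<bar> \<le> M * (\<integral>w. \<bar>\<psi> w\<bar> \<partial>lebesgue_on Sq)"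
      using Tadj_abs_le_L1[OF compact_Sq compact_Sp kc z sqint_imp_integrable[OF compact_Sq] M(2)] \<psi> by auto
    also have "\<dots> \<le> M * (sqrt (measure lebesgue Sq) * L2norm Sq \<psi>)"
      using L1_le_L2norm[OF compact_Sq, of \<psi>] \<psi> M(1) by (intro mult_left_mono) auto
    also have "\<dots> \<le> M * (sqrt (measure lebesgue Sq) * 1)"
      using \<psi> M(1) by (intro mult_left_mono) auto
    finally show "\<bar>Tadj Sq k \<psi> z\<bar> \<le> ?c" by simp
  qed
  then show ?thesis using M(1) by (intro exI[of _ ?c]) auto
qed

lemma TsT_abs_le:
  assumes N: "norm_2inf Sq Sp k \<le> ennreal c" "0 \<le> c" and u: "sqint Sp u" and z: "z \<in> Sp"
  shows "\<bar>TsT u z\<bar> \<le> c * L2norm Sq (Top Sp k u)"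
  by (rule Tadj_abs_le_norm_2inf[OF N Top_sqint[OF u] z])

lemma L2norm_TsT_le:
  assumes N: "norm_2inf Sq Sp k \<le> ennreal c" "0 \<le> c" and g: "sqint Sp g"
  shows "L2norm Sp (TsT g) \<le> c * sqrt (measure lebesgue Sp) * L2norm Sq (Top Sp k g)"
proof -
  let ?c1 = "c * sqrt (measure lebesgue Sp)"
  let ?a = "L2norm Sp (TsT g)" and ?t = "L2norm Sq (Top Sp k g)"
  have "?a^2 = ip Sq (Top Sp k g) (Top Sp k (TsT g))"
    using ip_Tadj_Top[OF TsT_sqint[OF g] Top_sqint[OF g]] by (simp add: L2norm_sq)
  also have "\<dots> \<le> \<bar>ip Sq (Top Sp k g) (Top Sp k (TsT g))\<bar>" by simp
  also have "\<dots> \<le> ?t * L2norm Sq (Top Sp k (TsT g))"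
    by (rule ip_Cauchy_Schwarz[OF Top_sqint[OF g] Top_sqint[OF TsT_sqint[OF g]]])
  also have "\<dots> \<le> ?t * (?c1 * ?a)"
    by (intro mult_left_mono L2norm_Top_le[OF N TsT_sqint[OF g]]) (simp add: L2norm_nonneg)
  finally have *: "?a * ?a \<le> ?a * (?c1 * ?t)" by (simp add: power2_eq_square mult_ac)
  show ?thesis
  proof (cases "?a = 0")
    case True then show ?thesis using N by (simp add: L2norm_nonneg)
  next
    case False
    then have "?a > 0" using L2norm_nonneg[of Sp "TsT g"] by simp
    with * show ?thesis by simp
  qed
qed

lemma L2norm_shift_TsT_le:
  assumes N: "norm_2inf Sq Sp k \<le> ennreal c" "0 \<le> c" and g: "sqint Sp g"
    and cc: "(c * sqrt (measure lebesgue Sp))^2 \<le> cc" "0 < cc"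
  shows "L2norm Sp (\<lambda>z. cc * g z - TsT g z) \<le> cc * L2norm Sp g"
proof -
  let ?c1 = "c * sqrt (measure lebesgue Sp)"
  let ?t = "L2norm Sq (Top Sp k g)"
  have cg: "sqint Sp (\<lambda>z. cc * g z)" by (rule sqint_cmult[OF g])
  have Ag: "sqint Sp (TsT g)" by (rule TsT_sqint[OF g])
  have "ip Sp (\<lambda>z. cc * g z - TsT g z) (\<lambda>z. cc * g z - TsT g z)
      = cc^2 * ip Sp g g - 2 * cc * ip Sp (TsT g) g + ip Sp (TsT g) (TsT g)"
    using cg Ag g
    by (simp add: ip_diff_left ip_diff_right sqint_diff ip_cmult_left ip_cmult_right ip_comm[of Sp g "TsT g"]
        power2_eq_square algebra_simps)
  also have "ip Sp (TsT g) g = ?t^2" by (rule ip_TsT_self[OF g])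
  also have "ip Sp (TsT g) (TsT g) = (L2norm Sp (TsT g))^2" by (simp add: L2norm_sq)
  also have "(L2norm Sp (TsT g))^2 \<le> (?c1 * ?t)^2"
    using L2norm_TsT_le[OF N g] by (intro power_mono) (simp_all add: L2norm_nonneg)
  also have "(?c1 * ?t)^2 = ?c1^2 * ?t^2" by (simp add: power_mult_distrib)
  finally have "ip Sp (\<lambda>z. cc * g z - TsT g z) (\<lambda>z. cc * g z - TsT g z)
      \<le> cc^2 * ip Sp g g - 2 * cc * ?t^2 + ?c1^2 * ?t^2" by simp
  also have "\<dots> \<le> cc^2 * ip Sp g g"
  proof -
    have "?c1^2 * ?t^2 \<le> cc * ?t^2" using cc by (intro mult_right_mono) auto
    also have "\<dots> \<le> 2 * cc * ?t^2" using cc by (intro mult_right_mono) auto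
    finally show ?thesis by simp
  qed
  finally have "sqrt (ip Sp (\<lambda>z. cc * g z - TsT g z) (\<lambda>z. cc * g z - TsT g z)) \<le> sqrt (cc^2 * ip Sp g g)"
    by (rule real_sqrt_le_mono)
  then show ?thesis using cc by (simp add: L2norm_eq_sqrt real_sqrt_mult)
qed

lemma TsT_abs_le_L2norm:
  assumes N: "norm_2inf Sq Sp k \<le> ennreal c" "0 \<le> c" and u: "sqint Sp u" and z: "z \<in> Sp"
  shows "\<bar>TsT u z\<bar> \<le> c^2 * sqrt (measure lebesgue Sp) * L2norm Sp u"
proof -
  have "\<bar>TsT u z\<bar> \<le> c * L2norm Sq (Top Sp k u)" by (rule TsT_abs_le[OF N u z])
  also have "\<dots> \<le> c * (c * sqrt (measure lebesgue Sp) * L2norm Sp u)"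
    using L2norm_Top_le[OF N u] N(2) by (rule mult_left_mono)
  finally show ?thesis by (simp add: power2_eq_square mult_ac)
qed

lemma TsT_tendsto_uniform_limit:
  assumes ul: "uniform_limit Sp G g sequentially" and G: "\<And>m. sqint Sp (G m)" and g: "sqint Sp g"
    and z: "z \<in> Sp"
  shows "(\<lambda>m. TsT (G m) z) \<longlonglongrightarrow> TsT g z"
proof (rule LIMSEQ_I)
  fix e :: real assume e: "0 < e"
  obtain c where c: "0 \<le> c" "norm_2inf Sq Sp k \<le> ennreal c" using norm_2inf_finite by blast
  let ?V = "measure lebesgue Sp"
  define K where "K = c^2 * sqrt ?V * sqrt ?V + 1"
  have K: "0 < K" using c by (simp add: K_def add_nonneg_pos)
  obtain N where N: "\<And>n x. n \<ge> N \<Longrightarrow> x \<in> Sp \<Longrightarrow> dist (G n x) (g x) < e / K"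
    using ul e K unfolding uniform_limit_sequentially_iff by (meson divide_pos_pos)
  show "\<exists>N. \<forall>n\<ge>N. norm (TsT (G n) z - TsT g z) < e"
  proof (intro exI allI impI)
    fix n assume n: "n \<ge> N"
    have d: "sqint Sp (\<lambda>x. G n x - g x)" by (intro sqint_diff G g)
    have "\<bar>TsT (G n) z - TsT g z\<bar> = \<bar>TsT (\<lambda>x. G n x - g x) z\<bar>" by (simp add: TsT_diff[OF G g z])
    also have "\<dots> \<le> c^2 * sqrt ?V * L2norm Sp (\<lambda>x. G n x - g x)"
      by (rule TsT_abs_le_L2norm[OF c(2) c(1) d z])
    also have "\<dots> \<le> c^2 * sqrt ?V * (sqrt ?V * (e / K))"
      using N[OF n] by (intro mult_left_mono L2norm_le_sup[OF compact_Sp d])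
        (auto simp: dist_real_def less_imp_le)
    also have "\<dots> = (K - 1) * (e / K)" by (simp add: K_def mult_ac)
    also have "\<dots> < e" using K e by (simp add: field_simps)
    finally show "norm (TsT (G n) z - TsT g z) < e" by simp
  qed
qed

end

section \<open>Tikhonov regularisation\<close>

lemma geometric_recurrence_bound_aux:
  fixes x :: "nat \<Rightarrow> real"
  assumes r: "0 \<le> r" "r \<le> q" and E: "0 \<le> E" and x0: "x 0 \<le> C" and C: "E \<le> C * (q - r)"
    and rec: "\<And>m. x (Suc m) \<le> r * x m + E * r^m"
  shows "x m \<le> C * q^m"
proof (induction m)
  case 0 then show ?case using x0 by simp
next
  case (Suc m)
  have "x (Suc m) \<le> r * (C * q^m) + E * r^m"
    using rec[of m] mult_left_mono[OF Suc r(1)] by linarith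
  also have "E * r^m \<le> E * q^m" using E r by (intro mult_left_mono power_mono) auto
  also have "E * q^m \<le> C * (q - r) * q^m" using C r by (intro mult_right_mono) auto
  also have "r * (C * q^m) + C * (q - r) * q^m = C * q^(Suc m)" by (simp add: algebra_simps)
  finally show ?case by simp
qed

lemma geometric_recurrence_bound:
  fixes x :: "nat \<Rightarrow> real"
  assumes r: "0 \<le> r" "r < 1" and E: "0 \<le> E" and x0: "x 0 \<le> D"
    and rec: "\<And>m. x (Suc m) \<le> r * x m + E * r^m"
  shows "x m \<le> max D (2 * E / (1 - r)) * ((1 + r) / 2)^m"
proof (rule geometric_recurrence_bound_aux[OF r(1) _ E _ _ rec])
  have "E = 2 * E / (1 - r) * ((1 + r) / 2 - r)" using r by (simp add: field_simps)
  also have "\<dots> \<le> max D (2 * E / (1 - r)) * ((1 + r) / 2 - r)" using r by (intro mult_right_mono) auto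
  finally show "E \<le> max D (2 * E / (1 - r)) * ((1 + r) / 2 - r)" .
qed (use r x0 in auto)

lemma uniform_limit_geometric_increments:
  fixes G :: "nat \<Rightarrow> 'a::topological_space \<Rightarrow> real"
  assumes cont: "\<And>m. continuous_on S (G m)" and q: "0 \<le> q" "q < 1"
    and incr: "\<And>m z. z \<in> S \<Longrightarrow> \<bar>G (Suc m) z - G m z\<bar> \<le> B * q^m"
  obtains g where "continuous_on S g" "uniform_limit S G g sequentially"
proof
  define g where "g = (\<lambda>z. G 0 z + (\<Sum>i. G (Suc i) z - G i z))"
  have "uniform_limit S (\<lambda>n z. G 0 z + (\<Sum>i<n. G (Suc i) z - G i z)) g sequentially"
    unfolding g_def using q
    by (intro uniform_limit_add uniform_limit_const Weierstrass_m_test[where M = "\<lambda>m. B * q^m"])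
      (auto simp: incr summable_geometric)
  moreover have "G 0 z + (\<Sum>i<n. G (Suc i) z - G i z) = G n z" for n z
    using sum_lessThan_telescope[of "\<lambda>i. G i z" n] by simp
  ultimately show ul: "uniform_limit S G g sequentially" by simp
  show "continuous_on S g"
    using cont by (intro uniform_limit_theorem[OF _ ul]) auto
qed

context cube_kernel begin

text \<open>For \<open>\<gamma> \<ge> \<parallel>T\<parallel>\<^sup>2\<close> the step is an \<open>L\<^sub>2\<close>-contraction with ratio \<open>\<gamma> / (\<alpha> + \<gamma>)\<close>; its fixed points
  on the cube are exactly the solutions of \<open>\<alpha> g + T\<^sup>*T g = h\<close>.\<close>

definition tikhonov_step :: "real \<Rightarrow> real \<Rightarrow> (real^'p \<Rightarrow> real) \<Rightarrow> (real^'p \<Rightarrow> real) \<Rightarrow> real^'p \<Rightarrow> real"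
  where "tikhonov_step \<alpha> \<gamma> h g z = (if z \<in> Sp then (h z + \<gamma> * g z - TsT g z) / (\<alpha> + \<gamma>) else 0)"

lemma tikhonov_step_cont:
  assumes "continuous_on Sp h" "continuous_on Sp g" "0 < \<alpha> + \<gamma>"
  shows "continuous_on Sp (tikhonov_step \<alpha> \<gamma> h g)"
proof -
  have "continuous_on Sp (\<lambda>z. (h z + \<gamma> * g z - TsT g z) / (\<alpha> + \<gamma>))"
    using assms TsT_cont[OF continuous_on_compact_sqint[OF compact_Sp assms(2)]]
    by (intro continuous_intros) auto
  then show ?thesis by (rule continuous_on_cong[THEN iffD1, rotated 2]) (auto simp: tikhonov_step_def)
qed

lemma tikhonov_step_diff:
  assumes "sqint Sp f1" "sqint Sp f2" "z \<in> Sp"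
  shows "tikhonov_step \<alpha> \<gamma> h f1 z - tikhonov_step \<alpha> \<gamma> h f2 z
       = (\<gamma> * (f1 z - f2 z) - TsT (\<lambda>x. f1 x - f2 x) z) / (\<alpha> + \<gamma>)"
  using assms by (simp add: tikhonov_step_def TsT_diff diff_divide_distrib[symmetric] algebra_simps)

lemma L2norm_tikhonov_step_diff_le:
  assumes N: "norm_2inf Sq Sp k \<le> ennreal c" "0 \<le> c" and f: "sqint Sp f1" "sqint Sp f2"
    and \<gamma>: "(c * sqrt (measure lebesgue Sp))^2 \<le> \<gamma>" "0 < \<gamma>" and \<alpha>: "0 < \<alpha>"
  shows "L2norm Sp (\<lambda>z. tikhonov_step \<alpha> \<gamma> h f1 z - tikhonov_step \<alpha> \<gamma> h f2 z)
       \<le> \<gamma> / (\<alpha> + \<gamma>) * L2norm Sp (\<lambda>z. f1 z - f2 z)"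
proof -
  have d: "sqint Sp (\<lambda>z. f1 z - f2 z)" by (rule sqint_diff[OF f])
  have "L2norm Sp (\<lambda>z. tikhonov_step \<alpha> \<gamma> h f1 z - tikhonov_step \<alpha> \<gamma> h f2 z)
      = L2norm Sp (\<lambda>z. (\<gamma> * (f1 z - f2 z) - TsT (\<lambda>x. f1 x - f2 x) z) / (\<alpha> + \<gamma>))"
    by (rule L2norm_cong) (simp add: tikhonov_step_diff[OF f])
  also have "\<dots> = L2norm Sp (\<lambda>z. \<gamma> * (f1 z - f2 z) - TsT (\<lambda>x. f1 x - f2 x) z) / (\<alpha> + \<gamma>)"
    using \<alpha> \<gamma> by (intro L2norm_divide) auto
  also have "\<dots> \<le> \<gamma> * L2norm Sp (\<lambda>z. f1 z - f2 z) / (\<alpha> + \<gamma>)"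
    using \<alpha> \<gamma> by (intro divide_right_mono L2norm_shift_TsT_le[OF N d]) auto
  finally show ?thesis by simp
qed

lemma tikhonov_step_diff_abs_le:
  assumes N: "norm_2inf Sq Sp k \<le> ennreal c" "0 \<le> c" and f: "sqint Sp f1" "sqint Sp f2"
    and \<gamma>: "0 < \<gamma>" and \<alpha>: "0 < \<alpha>" and z: "z \<in> Sp"
  shows "\<bar>tikhonov_step \<alpha> \<gamma> h f1 z - tikhonov_step \<alpha> \<gamma> h f2 z\<bar>
       \<le> \<gamma> / (\<alpha> + \<gamma>) * \<bar>f1 z - f2 z\<bar>
         + c^2 * sqrt (measure lebesgue Sp) / (\<alpha> + \<gamma>) * L2norm Sp (\<lambda>z. f1 z - f2 z)"
proof -
  have d: "sqint Sp (\<lambda>z. f1 z - f2 z)" by (rule sqint_diff[OF f])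
  have "\<bar>tikhonov_step \<alpha> \<gamma> h f1 z - tikhonov_step \<alpha> \<gamma> h f2 z\<bar>
      = \<bar>\<gamma> * (f1 z - f2 z) - TsT (\<lambda>x. f1 x - f2 x) z\<bar> / (\<alpha> + \<gamma>)"
    using \<alpha> \<gamma> by (simp add: tikhonov_step_diff[OF f z])
  also have "\<dots> \<le> (\<gamma> * \<bar>f1 z - f2 z\<bar> + c^2 * sqrt (measure lebesgue Sp) * L2norm Sp (\<lambda>z. f1 z - f2 z))
      / (\<alpha> + \<gamma>)"
    using \<alpha> \<gamma> TsT_abs_le_L2norm[OF N d z]
    by (intro divide_right_mono) (auto simp: abs_mult intro: abs_triangle_ineq4[THEN order_trans])
  finally show ?thesis by (simp add: add_divide_distrib)
qed

lemma tikhonov_iteration_converges: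
  assumes N: "norm_2inf Sq Sp k \<le> ennreal c" "0 \<le> c"
    and \<gamma>: "(c * sqrt (measure lebesgue Sp))^2 \<le> \<gamma>" "0 < \<gamma>" and \<alpha>: "0 < \<alpha>"
    and h: "continuous_on Sp h"
  obtains g where "continuous_on Sp g"
    and "uniform_limit Sp (\<lambda>m. (tikhonov_step \<alpha> \<gamma> h ^^ m) (\<lambda>z. 0)) g sequentially"
proof -
  define r where "r = \<gamma> / (\<alpha> + \<gamma>)"
  have r: "0 \<le> r" "r < 1" using \<alpha> \<gamma> by (auto simp: r_def)
  define G where "G m = (tikhonov_step \<alpha> \<gamma> h ^^ m) (\<lambda>z. 0)" for m
  have GS: "G (Suc m) = tikhonov_step \<alpha> \<gamma> h (G m)" for m by (simp add: G_def)
  have Gc: "continuous_on Sp (G m)" for m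
    by (induction m) (use \<alpha> \<gamma> in \<open>simp_all add: G_def tikhonov_step_cont h\<close>)
  have Gs: "sqint Sp (G m)" for m by (rule continuous_on_compact_sqint[OF compact_Sp Gc])
  define d where "d m = L2norm Sp (\<lambda>z. G (Suc m) z - G m z)" for m
  have d: "d m \<le> r^m * d 0" for m
  proof (induction m)
    case (Suc m)
    have "d (Suc m) = L2norm Sp (\<lambda>z. tikhonov_step \<alpha> \<gamma> h (G (Suc m)) z - tikhonov_step \<alpha> \<gamma> h (G m) z)"
      by (simp only: d_def GS)
    also have "\<dots> \<le> r * d m"
      unfolding d_def r_def by (rule L2norm_tikhonov_step_diff_le[OF N Gs Gs \<gamma> \<alpha>])
    also have "\<dots> \<le> r * (r^m * d 0)" using Suc r by (intro mult_left_mono) auto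
    finally show ?case by simp
  qed simp
  define E where "E = c^2 * sqrt (measure lebesgue Sp) / (\<alpha> + \<gamma>) * d 0"
  have E: "0 \<le> E" using \<alpha> \<gamma> by (simp add: E_def d_def L2norm_nonneg)
  have rec: "\<bar>G (Suc (Suc m)) z - G (Suc m) z\<bar> \<le> r * \<bar>G (Suc m) z - G m z\<bar> + E * r^m"
    if z: "z \<in> Sp" for m z
  proof -
    have "\<bar>G (Suc (Suc m)) z - G (Suc m) z\<bar>
        = \<bar>tikhonov_step \<alpha> \<gamma> h (G (Suc m)) z - tikhonov_step \<alpha> \<gamma> h (G m) z\<bar>"
      by (simp only: GS)
    also have "\<dots> \<le> r * \<bar>G (Suc m) z - G m z\<bar> + c^2 * sqrt (measure lebesgue Sp) / (\<alpha> + \<gamma>) * d m"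
      unfolding r_def d_def by (rule tikhonov_step_diff_abs_le[OF N Gs Gs \<gamma>(2) \<alpha> z])
    also have "\<dots> \<le> r * \<bar>G (Suc m) z - G m z\<bar> + E * r^m"
    proof -
      have "0 \<le> c^2 * sqrt (measure lebesgue Sp) / (\<alpha> + \<gamma>)" using \<alpha> \<gamma> by simp
      from mult_left_mono[OF d[of m] this] show ?thesis by (simp add: E_def mult_ac)
    qed
    finally show ?thesis .
  qed
  obtain D where D: "\<And>z. z \<in> Sp \<Longrightarrow> \<bar>G 1 z - G 0 z\<bar> \<le> D"
    using continuous_on_compact_abs_bounded[OF compact_Sp, of "\<lambda>z. G 1 z - G 0 z"] Gc
    by (auto intro: continuous_on_diff)
  have "\<bar>G (Suc m) z - G m z\<bar> \<le> max D (2 * E / (1 - r)) * ((1 + r) / 2)^m" if "z \<in> Sp" for m z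
    using geometric_recurrence_bound[OF r E, where x = "\<lambda>m. \<bar>G (Suc m) z - G m z\<bar>"] D rec that
    by simp
  from uniform_limit_geometric_increments[OF Gc _ _ this] r that show ?thesis
    unfolding G_def by auto
qed

lemma tikhonov_eq_solvable:
  assumes \<alpha>: "0 < \<alpha>" and h: "continuous_on Sp h"
  shows "\<exists>g. continuous_on Sp g \<and> (\<forall>z. z \<notin> Sp \<longrightarrow> g z = 0) \<and> (\<forall>z\<in>Sp. \<alpha> * g z + TsT g z = h z)"
proof -
  obtain c where c: "norm_2inf Sq Sp k \<le> ennreal c" "0 \<le> c" using norm_2inf_finite by blast
  define \<gamma> where "\<gamma> = (c * sqrt (measure lebesgue Sp))^2 + 1"
  have \<gamma>: "(c * sqrt (measure lebesgue Sp))^2 \<le> \<gamma>" "0 < \<gamma>" by (simp_all add: \<gamma>_def add_nonneg_pos)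
  define G where "G m = (tikhonov_step \<alpha> \<gamma> h ^^ m) (\<lambda>z. 0)" for m
  have GS: "G (Suc m) = tikhonov_step \<alpha> \<gamma> h (G m)" for m by (simp add: G_def)
  have "continuous_on Sp (G m)" for m
    by (induction m) (use \<alpha> \<gamma> in \<open>simp_all add: G_def tikhonov_step_cont h\<close>)
  then have Gs: "sqint Sp (G m)" for m by (rule continuous_on_compact_sqint[OF compact_Sp])
  obtain g0 where g0: "continuous_on Sp g0" "uniform_limit Sp G g0 sequentially"
    using tikhonov_iteration_converges[OF c \<gamma> \<alpha> h] unfolding G_def by blast
  define g where "g z = (if z \<in> Sp then g0 z else 0)" for z
  have gc: "continuous_on Sp g" using g0(1) by (rule continuous_on_cong[THEN iffD1, rotated 2]) (auto simp: g_def)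
  have ul: "uniform_limit Sp G g sequentially"
    using g0(2) by (rule uniform_limit_cong'[THEN iffD1, rotated 2]) (auto simp: g_def)
  have gs: "sqint Sp g" by (rule continuous_on_compact_sqint[OF compact_Sp gc])
  have eq: "\<alpha> * g z + TsT g z = h z" if z: "z \<in> Sp" for z
  proof -
    have lim: "(\<lambda>m. G m z) \<longlonglongrightarrow> g z" by (rule tendsto_uniform_limitI[OF ul z])
    have "(\<lambda>m. G (Suc m) z) \<longlonglongrightarrow> (h z + \<gamma> * g z - TsT g z) / (\<alpha> + \<gamma>)"
      using z \<alpha> \<gamma> unfolding GS tikhonov_step_def
      by (auto intro!: tendsto_intros lim TsT_tendsto_uniform_limit[OF ul Gs gs z])
    then have "g z = (h z + \<gamma> * g z - TsT g z) / (\<alpha> + \<gamma>)"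
      by (rule LIMSEQ_unique[OF LIMSEQ_Suc[OF lim]])
    then show ?thesis using \<alpha> \<gamma> by (simp add: field_simps)
  qed
  have "\<forall>z. z \<notin> Sp \<longrightarrow> g z = 0" by (simp add: g_def)
  with gc eq show ?thesis by blast
qed

lemma tikhonov_energy_identity:
  assumes g: "sqint Sp g" and eq: "\<And>x. x \<in> Sp \<Longrightarrow> \<alpha> * g x + TsT g x = f x"
  shows "\<alpha> * (L2norm Sp g)^2 + (L2norm Sq (Top Sp k g))^2 = ip Sp f g"
proof -
  have "ip Sp f g = ip Sp (\<lambda>x. \<alpha> * g x + TsT g x) g" by (rule ip_cong) (simp_all add: eq)
  also have "\<dots> = \<alpha> * (L2norm Sp g)^2 + (L2norm Sq (Top Sp k g))^2"
    using g TsT_sqint[OF g] by (simp add: ip_add_left sqint_cmult ip_cmult_left ip_TsT_self L2norm_sq)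
  finally show ?thesis ..
qed

lemma tikhonov_eq_unique:
  assumes \<alpha>: "0 < \<alpha>"
    and g1: "continuous_on Sp g1" "\<forall>z. z \<notin> Sp \<longrightarrow> g1 z = 0" "\<forall>z\<in>Sp. \<alpha> * g1 z + TsT g1 z = h z"
    and g2: "continuous_on Sp g2" "\<forall>z. z \<notin> Sp \<longrightarrow> g2 z = 0" "\<forall>z\<in>Sp. \<alpha> * g2 z + TsT g2 z = h z"
  shows "g1 = g2"
proof -
  have s1: "sqint Sp g1" and s2: "sqint Sp g2" using g1(1) g2(1) by (auto intro: continuous_on_compact_sqint[OF compact_Sp])
  define dd where "dd = (\<lambda>z. g1 z - g2 z)"
  have ds: "sqint Sp dd" unfolding dd_def by (rule sqint_diff[OF s1 s2])
  have dc: "continuous_on Sp dd" unfolding dd_def using g1(1) g2(1) by (intro continuous_intros)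
  have e0: "\<alpha> * dd z + TsT dd z = 0" if z: "z \<in> Sp" for z
    using TsT_diff[OF s1 s2 z] g1(3)[rule_format, OF z] g2(3)[rule_format, OF z]
    unfolding dd_def right_diff_distrib by linarith
  have "\<alpha> * (L2norm Sp dd)^2 + (L2norm Sq (Top Sp k dd))^2 = ip Sp (\<lambda>z. 0) dd"
    by (rule tikhonov_energy_identity[OF ds]) (simp add: e0)
  then have "\<alpha> * (L2norm Sp dd)^2 + (L2norm Sq (Top Sp k dd))^2 = 0" by (simp add: ip_def)
  moreover have "0 \<le> (L2norm Sq (Top Sp k dd))^2" by simp
  ultimately have "\<alpha> * (L2norm Sp dd)^2 \<le> 0" by linarith
  then have "(L2norm Sp dd)^2 \<le> 0" using \<alpha> by (simp add: mult_le_0_iff)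
  then have n0: "L2norm Sp dd = 0" by simp
  have "dd z = 0" if "z \<in> Sp" for z
    by (rule continuous_L2norm_eq_0[OF ab dc n0 that])
  then have "\<And>z. z \<in> Sp \<Longrightarrow> g1 z = g2 z" by (simp add: dd_def)
  then show ?thesis using g1(2) g2(2) by (metis ext)
qed

lemma reg_inv_solves:
  assumes \<alpha>: "0 < \<alpha>" and h: "continuous_on Sp h"
  shows "continuous_on Sp (reg_inv Sp Sq k \<alpha> h) \<and> (\<forall>z. z \<notin> Sp \<longrightarrow> reg_inv Sp Sq k \<alpha> h z = 0)
     \<and> (\<forall>z\<in>Sp. \<alpha> * reg_inv Sp Sq k \<alpha> h z + TsT (reg_inv Sp Sq k \<alpha> h) z = h z)"
proof -
  have "\<exists>!g. continuous_on Sp g \<and> (\<forall>z. z \<notin> Sp \<longrightarrow> g z = 0) \<and> (\<forall>z\<in>Sp. \<alpha> * g z + TsT g z = h z)"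
  proof (rule ex_ex1I)
    show "\<exists>g. continuous_on Sp g \<and> (\<forall>z. z \<notin> Sp \<longrightarrow> g z = 0) \<and> (\<forall>z\<in>Sp. \<alpha> * g z + TsT g z = h z)"
      by (rule tikhonov_eq_solvable[OF \<alpha> h])
  next
    fix g1 g2
    assume "continuous_on Sp g1 \<and> (\<forall>z. z \<notin> Sp \<longrightarrow> g1 z = 0) \<and> (\<forall>z\<in>Sp. \<alpha> * g1 z + TsT g1 z = h z)"
      "continuous_on Sp g2 \<and> (\<forall>z. z \<notin> Sp \<longrightarrow> g2 z = 0) \<and> (\<forall>z\<in>Sp. \<alpha> * g2 z + TsT g2 z = h z)"
    then show "g1 = g2" using tikhonov_eq_unique[OF \<alpha>] by blast
  qed
  then show ?thesis unfolding reg_inv_def by (rule theI')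
qed

lemma reg_proj_solves:
  assumes \<alpha>: "0 < \<alpha>" and \<phi>: "continuous_on Sp \<phi>"
  shows "continuous_on Sp (reg_proj Sp Sq k \<alpha> \<phi>) \<and> (\<forall>z. z \<notin> Sp \<longrightarrow> reg_proj Sp Sq k \<alpha> \<phi> z = 0)
     \<and> (\<forall>z\<in>Sp. \<alpha> * reg_proj Sp Sq k \<alpha> \<phi> z + TsT (reg_proj Sp Sq k \<alpha> \<phi>) z = TsT \<phi> z)"
  unfolding reg_proj_def
  by (rule reg_inv_solves[OF \<alpha> TsT_cont[OF continuous_on_compact_sqint[OF compact_Sp \<phi>]]])

lemma sqint_reg_proj: "0 < \<alpha> \<Longrightarrow> continuous_on Sp \<phi> \<Longrightarrow> sqint Sp (reg_proj Sp Sq k \<alpha> \<phi>)"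
  using reg_proj_solves continuous_on_compact_sqint[OF compact_Sp] by blast

lemma reg_proj_residual:
  assumes \<alpha>: "0 < \<alpha>" and \<phi>: "continuous_on Sp \<phi>"
  defines "g \<equiv> \<lambda>x. \<phi> x - reg_proj Sp Sq k \<alpha> \<phi> x"
  shows "sqint Sp g" and "\<And>x. x \<in> Sp \<Longrightarrow> \<alpha> * g x + TsT g x = \<alpha> * \<phi> x"
proof -
  have peq: "\<forall>x\<in>Sp. \<alpha> * reg_proj Sp Sq k \<alpha> \<phi> x + TsT (reg_proj Sp Sq k \<alpha> \<phi>) x = TsT \<phi> x"
    using reg_proj_solves[OF \<alpha> \<phi>] by auto
  have \<phi>s: "sqint Sp \<phi>" and ps: "sqint Sp (reg_proj Sp Sq k \<alpha> \<phi>)"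
    using \<phi> continuous_on_compact_sqint[OF compact_Sp] sqint_reg_proj[OF \<alpha> \<phi>] by auto
  show "sqint Sp g" unfolding g_def by (rule sqint_diff[OF \<phi>s ps])
  show "\<alpha> * g x + TsT g x = \<alpha> * \<phi> x" if x: "x \<in> Sp" for x
    using TsT_diff[OF \<phi>s ps x] peq x unfolding g_def right_diff_distrib by auto
qed

end

section \<open>The source condition\<close>

context cube_kernel begin

lemma eigsys_eigenvector:
  assumes E: "eigsys Sp (\<lambda>f. TsT f) e lam"
  shows "L2norm Sp (\<lambda>x. TsT (e j) x - lam j * e j x) = 0"
proof -
  have es: "\<And>j. sqint Sp (e j)" and orth: "\<And>i j. ip Sp (e i) (e j) = (if i = j then 1 else 0)"
    and ls: "\<And>f. sqint Sp f \<Longrightarrow> L2_sums Sp (\<lambda>j. lam j * ip Sp f (e j)) e (TsT f)"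
    using E unfolding eigsys_def by auto
  have L: "(\<lambda>N. L2norm Sp (\<lambda>x. TsT (e j) x - (\<Sum>i<N. lam i * ip Sp (e j) (e i) * e i x))) \<longlonglongrightarrow> 0"
    using ls[OF es[of j]] unfolding L2_sums_def .
  have sumeq: "(\<Sum>i<n + Suc j. lam i * ip Sp (e j) (e i) * e i x) = lam j * e j x" for n x
  proof -
    have "(\<Sum>i<n + Suc j. lam i * ip Sp (e j) (e i) * e i x) = (\<Sum>i<n + Suc j. if j = i then lam j * e j x else 0)"
      by (intro sum.cong refl) (simp add: orth)
    also have "\<dots> = lam j * e j x" by (simp add: sum.delta)
    finally show ?thesis .
  qed
  have "(\<lambda>n. L2norm Sp (\<lambda>x. TsT (e j) x - (\<Sum>i<n + Suc j. lam i * ip Sp (e j) (e i) * e i x))) \<longlonglongrightarrow> 0"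
    using LIMSEQ_ignore_initial_segment[OF L, of "Suc j"] by simp
  then have "(\<lambda>n. L2norm Sp (\<lambda>x. TsT (e j) x - lam j * e j x)) \<longlonglongrightarrow> 0"
    unfolding sumeq .
  then show ?thesis by (simp add: LIMSEQ_const_iff)
qed

lemma eigsys_ip_TsT:
  assumes E: "eigsys Sp (\<lambda>f. TsT f) e lam" and u: "sqint Sp u"
  shows "ip Sp (TsT (e j)) u = lam j * ip Sp (e j) u"
proof -
  have es: "sqint Sp (e j)" using E unfolding eigsys_def by auto
  have s1: "sqint Sp (TsT (e j))" by (rule TsT_sqint[OF es])
  have s2: "sqint Sp (\<lambda>x. lam j * e j x)" by (rule sqint_cmult[OF es])
  have "\<bar>ip Sp (\<lambda>x. TsT (e j) x - lam j * e j x) u\<bar> \<le> L2norm Sp (\<lambda>x. TsT (e j) x - lam j * e j x) * L2norm Sp u"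
    by (rule ip_Cauchy_Schwarz[OF sqint_diff[OF s1 s2] u])
  also have "\<dots> = 0" by (simp add: eigsys_eigenvector[OF E])
  finally have "ip Sp (\<lambda>x. TsT (e j) x - lam j * e j x) u = 0" by simp
  then show ?thesis using s1 s2 u by (simp add: ip_diff_left ip_cmult_left)
qed

lemma eigsys_ip_Top:
  assumes E: "eigsys Sp (\<lambda>f. TsT f) e lam" and u: "sqint Sp u"
  shows "ip Sq (Top Sp k (e j)) (Top Sp k u) = lam j * ip Sp (e j) u"
proof -
  have es: "sqint Sp (e j)" using E unfolding eigsys_def by auto
  have "ip Sq (Top Sp k (e j)) (Top Sp k u) = ip Sp (TsT (e j)) u"
    by (rule ip_Tadj_Top[OF u Top_sqint[OF es], symmetric])
  then show ?thesis by (simp add: eigsys_ip_TsT[OF E u])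
qed

lemma eigsys_eigenvalue_le:
  assumes E: "eigsys Sp (\<lambda>f. TsT f) e lam" and c: "0 \<le> c" "norm_2inf Sq Sp k \<le> ennreal c"
  shows "lam j \<le> c^2 * measure lebesgue Sp"
proof -
  have es: "sqint Sp (e j)" and n1: "ip Sp (e j) (e j) = 1" using E unfolding eigsys_def by auto
  have l1: "L2norm Sp (e j) = 1" using n1 by (simp add: L2norm_eq_sqrt)
  have "lam j = ip Sq (Top Sp k (e j)) (Top Sp k (e j))" using eigsys_ip_Top[OF E es, of j] n1 by simp
  also have "\<dots> = (L2norm Sq (Top Sp k (e j)))^2" by (simp add: L2norm_sq)
  also have "\<dots> \<le> (c * sqrt (measure lebesgue Sp) * L2norm Sp (e j))^2"
    by (intro power_mono L2norm_Top_le[OF c(2) c(1) es]) (simp add: L2norm_nonneg)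
  also have "\<dots> = c^2 * measure lebesgue Sp" by (simp add: l1 power_mult_distrib)
  finally show ?thesis .
qed

lemma source_partial_sum_bound:
  assumes E: "eigsys Sp (\<lambda>f. TsT f) e lam" and c: "0 \<le> c" "norm_2inf Sq Sp k \<le> ennreal c"
    and \<beta>: "0 < \<beta>" and \<psi>: "sqint Sq \<psi>" and u: "sqint Sp u"
  shows "\<bar>\<Sum>j<N. lam j powr \<beta> * ip Sq \<psi> (Top Sp k (e j)) * ip Sp (e j) u\<bar>
     \<le> (c^2 * measure lebesgue Sp) powr \<beta> * L2norm Sq \<psi> * L2norm Sq (Top Sp k u)"
proof -
  let ?\<Lambda> = "c^2 * measure lebesgue Sp"
  have es: "\<And>j. sqint Sp (e j)" and lam0: "\<And>j. 0 \<le> lam j" using E unfolding eigsys_def by auto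
  define J where "J = {j \<in> {..<N}. 0 < lam j}"
  have J: "finite J" "J \<subseteq> {..<N}" by (auto simp: J_def)
  define a where "a = (\<lambda>j. ip Sq \<psi> (Top Sp k (e j)))"
  define bb where "bb = (\<lambda>j. ip Sq (Top Sp k u) (Top Sp k (e j)))"
  have tu: "sqint Sq (Top Sp k u)" by (rule Top_sqint[OF u])
  have tej: "\<And>j. sqint Sq (Top Sp k (e j))" by (rule Top_sqint[OF es])
  have orth: "ip Sq (Top Sp k (e i)) (Top Sp k (e j)) = (if i = j then lam j else 0)" for i j
    using eigsys_ip_Top[OF E es, of i j] E unfolding eigsys_def by auto
  have ipu: "ip Sp (e j) u = bb j / lam j" if "j \<in> J" for j
  proof -
    have "bb j = lam j * ip Sp (e j) u" unfolding bb_def using eigsys_ip_Top[OF E u, of j] by (simp add: ip_comm)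
    then show ?thesis using that by (simp add: J_def)
  qed
  have "(\<Sum>j<N. lam j powr \<beta> * ip Sq \<psi> (Top Sp k (e j)) * ip Sp (e j) u)
      = (\<Sum>j\<in>J. lam j powr \<beta> * ip Sq \<psi> (Top Sp k (e j)) * ip Sp (e j) u)"
  proof (rule sum.mono_neutral_right)
    show "finite {..<N}" by simp
    show "J \<subseteq> {..<N}" by (rule J(2))
    show "\<forall>i\<in>{..<N} - J. lam i powr \<beta> * ip Sq \<psi> (Top Sp k (e i)) * ip Sp (e i) u = 0"
    proof
      fix i assume "i \<in> {..<N} - J"
      then have "lam i = 0" using lam0[of i] by (auto simp: J_def)
      then show "lam i powr \<beta> * ip Sq \<psi> (Top Sp k (e i)) * ip Sp (e i) u = 0" by simp
    qed
  qed
  also have "\<dots> = (\<Sum>j\<in>J. lam j powr \<beta> * (a j * bb j / lam j))"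
    by (intro sum.cong refl) (simp add: ipu a_def)
  finally have eq: "(\<Sum>j<N. lam j powr \<beta> * ip Sq \<psi> (Top Sp k (e j)) * ip Sp (e j) u)
      = (\<Sum>j\<in>J. lam j powr \<beta> * (a j * bb j / lam j))" .
  have "\<bar>\<Sum>j\<in>J. lam j powr \<beta> * (a j * bb j / lam j)\<bar> \<le> (\<Sum>j\<in>J. \<bar>lam j powr \<beta> * (a j * bb j / lam j)\<bar>)"
    by (rule sum_abs)
  also have "\<dots> \<le> (\<Sum>j\<in>J. ?\<Lambda> powr \<beta> * (\<bar>a j\<bar> * \<bar>bb j\<bar> / lam j))"
  proof (rule sum_mono)
    fix j assume j: "j \<in> J"
    have "lam j powr \<beta> \<le> ?\<Lambda> powr \<beta>"
      by (rule powr_mono2) (use \<beta> lam0 eigsys_eigenvalue_le[OF E c] in auto)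
    then show "\<bar>lam j powr \<beta> * (a j * bb j / lam j)\<bar> \<le> ?\<Lambda> powr \<beta> * (\<bar>a j\<bar> * \<bar>bb j\<bar> / lam j)"
      using j lam0[of j] by (simp add: abs_mult divide_right_mono mult_right_mono)
  qed
  also have "\<dots> = ?\<Lambda> powr \<beta> * (\<Sum>j\<in>J. \<bar>a j\<bar> * \<bar>bb j\<bar> / lam j)"
    by (simp add: sum_distrib_left)
  also have "\<dots> \<le> ?\<Lambda> powr \<beta> * (L2norm Sq \<psi> * L2norm Sq (Top Sp k u))"
    unfolding a_def bb_def
    by (intro mult_left_mono Bessel_Cauchy_Schwarz[OF J(1) tej _ _ \<psi> tu]) (auto simp: J_def orth)
  finally show ?thesis unfolding eq by (simp add: mult_ac)
qed

lemma source_condition_ip_bound: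
  assumes c: "0 \<le> c" "norm_2inf Sq Sp k \<le> ennreal c" and \<beta>: "0 < \<beta>" and \<psi>: "sqint Sq \<psi>"
    and pw: "is_power_image Sp (\<lambda>f. TsT f) \<beta> (Tadj Sq k \<psi>) \<phi>" and \<phi>: "sqint Sp \<phi>" and u: "sqint Sp u"
  shows "\<bar>ip Sp \<phi> u\<bar> \<le> (c^2 * measure lebesgue Sp) powr \<beta> * L2norm Sq \<psi> * L2norm Sq (Top Sp k u)"
proof -
  let ?K = "(c^2 * measure lebesgue Sp) powr \<beta> * L2norm Sq \<psi> * L2norm Sq (Top Sp k u)"
  obtain e lam where E: "eigsys Sp (\<lambda>f. TsT f) e lam"
    and Ls: "L2_sums Sp (\<lambda>j. lam j powr \<beta> * ip Sp (Tadj Sq k \<psi>) (e j)) e \<phi>"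
    using pw unfolding is_power_image_def by blast
  have es: "\<And>j. sqint Sp (e j)" using E unfolding eigsys_def by auto
  define co where "co = (\<lambda>j. lam j powr \<beta> * ip Sp (Tadj Sq k \<psi>) (e j))"
  have co: "co j = lam j powr \<beta> * ip Sq \<psi> (Top Sp k (e j))" for j
    unfolding co_def by (simp add: ip_Tadj_Top[OF es \<psi>])
  define S where "S = (\<lambda>N x. \<Sum>j<N. co j * e j x)"
  have Ss: "sqint Sp (S N)" for N unfolding S_def by (intro sqint_sum sqint_cmult es) simp
  have ipS: "ip Sp (S N) u = (\<Sum>j<N. co j * ip Sp (e j) u)" for N
  proof -
    have "ip Sp (S N) u = (\<Sum>j<N. ip Sp (\<lambda>x. co j * e j x) u)"
      unfolding S_def by (rule ip_sum_left) (simp_all add: sqint_cmult es u)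
    then show ?thesis by (simp add: ip_cmult_left)
  qed
  have L: "(\<lambda>N. L2norm Sp (\<lambda>x. \<phi> x - S N x)) \<longlonglongrightarrow> 0"
    using Ls unfolding L2_sums_def S_def co_def .
  have "(\<lambda>N. ip Sp \<phi> u - ip Sp (S N) u) \<longlonglongrightarrow> 0"
  proof (rule Lim_null_comparison)
    show "\<forall>\<^sub>F N in sequentially. norm (ip Sp \<phi> u - ip Sp (S N) u) \<le> L2norm Sp (\<lambda>x. \<phi> x - S N x) * L2norm Sp u"
    proof (intro always_eventually allI)
      fix N
      have "ip Sp \<phi> u - ip Sp (S N) u = ip Sp (\<lambda>x. \<phi> x - S N x) u" by (simp add: ip_diff_left \<phi> Ss u)
      then show "norm (ip Sp \<phi> u - ip Sp (S N) u) \<le> L2norm Sp (\<lambda>x. \<phi> x - S N x) * L2norm Sp u"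
        using ip_Cauchy_Schwarz[OF sqint_diff[OF \<phi> Ss] u] by simp
    qed
    show "(\<lambda>N. L2norm Sp (\<lambda>x. \<phi> x - S N x) * L2norm Sp u) \<longlonglongrightarrow> 0"
      using tendsto_mult_left_zero[OF L] by simp
  qed
  then have "(\<lambda>N. ip Sp \<phi> u - (ip Sp \<phi> u - ip Sp (S N) u)) \<longlonglongrightarrow> ip Sp \<phi> u - 0"
    by (intro tendsto_intros)
  then have "(\<lambda>N. ip Sp (S N) u) \<longlonglongrightarrow> ip Sp \<phi> u" by simp
  then have lim: "(\<lambda>N. \<bar>ip Sp (S N) u\<bar>) \<longlonglongrightarrow> \<bar>ip Sp \<phi> u\<bar>" by (rule tendsto_rabs)
  have bnd: "\<bar>ip Sp (S N) u\<bar> \<le> ?K" for N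
  proof -
    have "ip Sp (S N) u = (\<Sum>j<N. lam j powr \<beta> * ip Sq \<psi> (Top Sp k (e j)) * ip Sp (e j) u)"
      by (simp add: ipS co)
    then show ?thesis using source_partial_sum_bound[OF E c \<beta> \<psi> u, of N] by simp
  qed
  show ?thesis by (rule LIMSEQ_le_const2[OF lim]) (use bnd in auto)
qed

end

lemma energy_ineq_bounds:
  fixes \<alpha> X Y P K F :: real
  assumes \<alpha>: "0 < \<alpha>" and XY: "0 \<le> X" "0 \<le> Y" and q: "\<alpha> * Y^2 + X^2 = \<alpha> * P"
    and P1: "\<bar>P\<bar> \<le> K * X" and P2: "\<bar>P\<bar> \<le> F * Y" and F: "0 \<le> F" and K: "0 \<le> K"
  shows "X \<le> \<alpha> * K" "Y \<le> sqrt \<alpha> * K" "X \<le> sqrt \<alpha> * F"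
proof -
  have aP: "\<alpha> * P \<le> \<alpha> * (K * X)" using P1 \<alpha> by (intro mult_left_mono) auto
  have aP2: "\<alpha> * P \<le> \<alpha> * (F * Y)" using P2 \<alpha> by (intro mult_left_mono) auto
  have "0 \<le> \<alpha> * Y^2" using \<alpha> by simp
  then have "X * X \<le> X * (\<alpha> * K)" using q aP by (simp add: power2_eq_square algebra_simps)
  then show X: "X \<le> \<alpha> * K"
    using XY K \<alpha> by (cases "X = 0") (auto simp: mult_le_cancel_left_pos)
  have "\<alpha> * Y^2 \<le> \<alpha> * (K * X)" using q aP zero_le_power2[of X] by linarith
  also have "\<dots> \<le> \<alpha> * (K * (\<alpha> * K))" using X K \<alpha> by (intro mult_left_mono) auto
  finally have "Y^2 \<le> \<alpha> * K^2" using \<alpha> by (simp add: power2_eq_square mult_ac)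
  then have "sqrt (Y^2) \<le> sqrt (\<alpha> * K^2)" by (rule real_sqrt_le_mono)
  then show "Y \<le> sqrt \<alpha> * K" using XY K by (simp add: real_sqrt_mult)
  have "\<alpha> * Y^2 \<le> \<alpha> * (F * Y)" using q aP2 zero_le_power2[of X] by linarith
  then have "\<alpha> * (Y * Y) \<le> \<alpha> * (Y * F)" by (simp add: power2_eq_square mult_ac)
  then have "Y * Y \<le> Y * F" using \<alpha> by simp
  then have YF: "Y \<le> F" using XY F by (cases "Y = 0") (auto simp: mult_le_cancel_left_pos)
  have "0 \<le> \<alpha> * Y^2" using \<alpha> by simp
  then have "X^2 \<le> \<alpha> * (F * Y)" using q aP2 by linarith
  also have "\<dots> \<le> \<alpha> * (F * F)" using YF F \<alpha> by (intro mult_left_mono) auto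
  finally have "sqrt (X^2) \<le> sqrt (\<alpha> * F^2)" by (intro real_sqrt_le_mono) (simp add: power2_eq_square)
  then show "X \<le> sqrt \<alpha> * F" using XY F by (simp add: real_sqrt_mult)
qed

context cube_kernel begin

lemma reg_proj_residual_bounds:
  assumes \<alpha>: "0 < \<alpha>" and \<phi>: "continuous_on Sp \<phi>" and \<phi>L: "\<And>z. z \<in> Sp \<Longrightarrow> \<bar>\<phi> z\<bar> \<le> L" and L: "0 \<le> L"
    and K\<phi>: "0 \<le> K\<phi>" and src: "\<And>u. sqint Sp u \<Longrightarrow> \<bar>ip Sp \<phi> u\<bar> \<le> K\<phi> * L2norm Sq (Top Sp k u)"
  defines "g \<equiv> \<lambda>x. \<phi> x - reg_proj Sp Sq k \<alpha> \<phi> x"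
  shows "L2norm Sq (Top Sp k g) \<le> \<alpha> * K\<phi>" and "L2norm Sp g \<le> sqrt \<alpha> * K\<phi>"
    and "L2norm Sq (Top Sp k g) \<le> sqrt \<alpha> * (sqrt (measure lebesgue Sp) * L)"
proof -
  have gs: "sqint Sp g" and geq: "\<And>x. x \<in> Sp \<Longrightarrow> \<alpha> * g x + TsT g x = \<alpha> * \<phi> x"
    using reg_proj_residual[OF \<alpha> \<phi>] unfolding g_def by auto
  have \<phi>s: "sqint Sp \<phi>" by (rule continuous_on_compact_sqint[OF compact_Sp \<phi>])
  have energy: "\<alpha> * (L2norm Sp g)^2 + (L2norm Sq (Top Sp k g))^2 = \<alpha> * ip Sp \<phi> g"
    using tikhonov_energy_identity[OF gs geq] by (simp add: ip_cmult_left)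
  have sup: "\<bar>ip Sp \<phi> g\<bar> \<le> sqrt (measure lebesgue Sp) * L * L2norm Sp g"
    using ip_Cauchy_Schwarz[OF \<phi>s gs] L2norm_le_sup[OF compact_Sp \<phi>s \<phi>L]
    by (meson L2norm_nonneg mult_right_mono order_trans)
  show "L2norm Sq (Top Sp k g) \<le> \<alpha> * K\<phi>" "L2norm Sp g \<le> sqrt \<alpha> * K\<phi>"
      "L2norm Sq (Top Sp k g) \<le> sqrt \<alpha> * (sqrt (measure lebesgue Sp) * L)"
    using energy_ineq_bounds[OF \<alpha> L2norm_nonneg L2norm_nonneg energy src[OF gs] sup] K\<phi> L by auto
qed

end

lemma src_classD:
  fixes \<phi> :: "real^'p \<Rightarrow> real" and k :: "real^'q \<Rightarrow> real^'p \<Rightarrow> real"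
  assumes cls: "(\<phi>, k) \<in> src_class a b t L \<beta> C" and ab: "a < b" and \<beta>: "0 < \<beta>" and C: "0 < C"
  shows "cube_kernel a b k" and "continuous_on (cube a b) \<phi>"
    and "\<And>z. z \<in> cube a b \<Longrightarrow> \<bar>\<phi> z\<bar> \<le> L"
    and "norm_2inf (cube a b) (cube a b) k \<le> ennreal C"
    and "\<And>u. sqint (cube a b) u \<Longrightarrow> \<bar>ip (cube a b) \<phi> u\<bar>
           \<le> (C^2 * measure lebesgue (cube a b :: (real^'p) set)) powr \<beta> * C
              * L2norm (cube a b) (Top (cube a b) k u)"
proof -
  have kc: "cont_kernel (cube a b) (cube a b) k" and hol: "holder (cube a b) t L \<phi>"
    and kN: "norm_2inf (cube a b) (cube a b) k \<le> ennreal C"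
    using cls unfolding src_class_def by auto
  obtain \<psi> where \<psi>: "sqint (cube a b) \<psi>" "L2norm (cube a b) \<psi> \<le> C"
    and pw: "is_power_image (cube a b) (\<lambda>f. Tadj (cube a b) k (Top (cube a b) k f)) \<beta> (Tadj (cube a b) k \<psi>) \<phi>"
    using cls unfolding src_class_def by auto
  interpret K: cube_kernel a b k by unfold_locales (rule ab, rule kc)
  show "cube_kernel a b k" "norm_2inf (cube a b) (cube a b) k \<le> ennreal C" by unfold_locales (fact kN)
  show \<phi>c: "continuous_on (cube a b) \<phi>" using hol unfolding holder_def by auto
  show "\<bar>\<phi> z\<bar> \<le> L" if "z \<in> cube a b" for z
    using hol that unfolding holder_def by (metis Dpar.simps(1) list.size(3) zero_le)
  show "\<bar>ip (cube a b) \<phi> u\<bar> \<le> (C^2 * measure lebesgue (cube a b :: (real^'p) set)) powr \<beta> * C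
      * L2norm (cube a b) (Top (cube a b) k u)" if u: "sqint (cube a b) u" for u
  proof -
    have "\<bar>ip (cube a b) \<phi> u\<bar> \<le> (C^2 * measure lebesgue (cube a b :: (real^'p) set)) powr \<beta>
        * L2norm (cube a b) \<psi> * L2norm (cube a b) (Top (cube a b) k u)"
      by (rule K.source_condition_ip_bound[OF less_imp_le[OF C] kN \<beta> \<psi>(1) pw
            continuous_on_compact_sqint[OF K.compact_Sp \<phi>c] u])
    also have "\<dots> \<le> (C^2 * measure lebesgue (cube a b :: (real^'p) set)) powr \<beta> * C
        * L2norm (cube a b) (Top (cube a b) k u)"
      using \<psi>(2) by (intro mult_right_mono mult_left_mono) (simp_all add: L2norm_nonneg)
    finally show ?thesis .
  qed
qed

section \<open>Perturbation of the kernel\<close>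

lemma quadratic_ineq_bound:
  fixes \<alpha> a b X Y :: real
  assumes \<alpha>: "0 < \<alpha>" and ab: "0 \<le> a" "0 \<le> b" and XY: "0 \<le> X" "0 \<le> Y"
    and q: "\<alpha> * Y^2 + X^2 \<le> a * X + b * Y"
  shows "X \<le> a + b / sqrt \<alpha>"
proof -
  define s where "s = b / sqrt \<alpha>"
  have s: "0 \<le> s" using ab \<alpha> by (simp add: s_def)
  have sa: "sqrt \<alpha> * sqrt \<alpha> = \<alpha>" using \<alpha> by simp
  have "0 \<le> (sqrt \<alpha> * Y - s / 2)^2" by simp
  also have "(sqrt \<alpha> * Y - s / 2)^2 = \<alpha> * Y^2 - b * Y + s^2 / 4"
  proof -
    have sb: "sqrt \<alpha> * s = b" using \<alpha> by (simp add: s_def)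
    have e1: "(sqrt \<alpha> * Y)^2 = \<alpha> * Y^2" using \<alpha> by (simp add: power_mult_distrib)
    have e2: "2 * (sqrt \<alpha> * Y) * (s / 2) = b * Y" using sb by (simp add: algebra_simps)
    have e3: "(s / 2)^2 = s^2 / 4" by (simp add: power_divide)
    show ?thesis unfolding power2_diff e1 e2 e3 by simp
  qed
  finally have "b * Y \<le> \<alpha> * Y^2 + s^2 / 4" by simp
  moreover have "0 \<le> s^2" by simp
  ultimately have X2: "X^2 \<le> a * X + s^2" using q by linarith
  show ?thesis
  proof (rule ccontr)
    assume "\<not> X \<le> a + b / sqrt \<alpha>"
    then have Xg: "X > a + s" by (simp add: s_def)
    have "X * X > X * (a + s)" using Xg XY ab s by (intro mult_strict_left_mono) auto
    then have h1: "X * X > X * a + X * s" by (simp add: distrib_left)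
    have "X * s \<ge> (a + s) * s" using Xg s by (intro mult_right_mono) auto
    then have h2: "X * s \<ge> a * s + s * s" by (simp add: distrib_right)
    have h3: "a * s \<ge> 0" using ab s by simp
    have "X * X > X * a + s * s" using h1 h2 h3 by linarith
    then have "X^2 > a * X + s^2" by (simp add: power2_eq_square mult.commute)
    with X2 show False by simp
  qed
qed

locale kernel_pair = K: cube_kernel a b k + H: cube_kernel a b kh
  for a b :: real and k kh :: "real^'q \<Rightarrow> real^'p \<Rightarrow> real"
begin

sublocale D: cube_kernel a b "\<lambda>w z. kh w z - k w z"
  by unfold_locales (rule K.ab, rule cont_kernel_diff[OF H.kc K.kc])

lemma Top_kernel_split:
  "sqint (cube a b) u \<Longrightarrow> w \<in> cube a b \<Longrightarrow>
   Top (cube a b) kh u w = Top (cube a b) k u w + Top (cube a b) (\<lambda>w z. kh w z - k w z) u w"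
  using K.Top_integrable H.Top_integrable unfolding Top_def by (simp add: left_diff_distrib)

lemma Tadj_kernel_split:
  "sqint (cube a b) v \<Longrightarrow> z \<in> cube a b \<Longrightarrow>
   Tadj (cube a b) kh v z = Tadj (cube a b) k v z + Tadj (cube a b) (\<lambda>w z. kh w z - k w z) v z"
  using K.Tadj_integrable H.Tadj_integrable unfolding Tadj_def by (simp add: left_diff_distrib)

lemma reg_proj_diff_eq:
  assumes \<alpha>: "0 < \<alpha>" and \<phi>: "continuous_on (cube a b) \<phi>" and x: "x \<in> cube a b"
  defines "g \<equiv> \<lambda>x. \<phi> x - reg_proj (cube a b) (cube a b) k \<alpha> \<phi> x"
    and "e \<equiv> \<lambda>x. reg_proj (cube a b) (cube a b) kh \<alpha> \<phi> x - reg_proj (cube a b) (cube a b) k \<alpha> \<phi> x"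
  shows "\<alpha> * e x + H.TsT e x = H.TsT g x - K.TsT g x"
proof -
  define gh where "gh = (\<lambda>x. \<phi> x - reg_proj (cube a b) (cube a b) kh \<alpha> \<phi> x)"
  have gs: "sqint (cube a b) g" and geq: "\<alpha> * g x + K.TsT g x = \<alpha> * \<phi> x"
    using K.reg_proj_residual[OF \<alpha> \<phi>] x unfolding g_def by auto
  have ghs: "sqint (cube a b) gh" and gheq: "\<alpha> * gh x + H.TsT gh x = \<alpha> * \<phi> x"
    using H.reg_proj_residual[OF \<alpha> \<phi>] x unfolding gh_def by auto
  have "H.TsT e x = H.TsT (\<lambda>x. g x - gh x) x" by (rule H.TsT_cong) (simp add: e_def g_def gh_def)
  also have "\<dots> = H.TsT g x - H.TsT gh x" by (rule H.TsT_diff[OF gs ghs x])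
  finally have "H.TsT e x = H.TsT g x - H.TsT gh x" .
  moreover have "e x = g x - gh x" by (simp add: e_def g_def gh_def)
  ultimately show ?thesis using geq gheq by (simp add: right_diff_distrib)
qed

lemma L2norm_Top_reg_proj_diff_le:
  assumes \<alpha>: "0 < \<alpha>" and \<phi>: "continuous_on (cube a b) \<phi>"
    and \<delta>: "0 \<le> \<delta>" and dN: "norm_2inf (cube a b) (cube a b) (\<lambda>w z. kh w z - k w z) \<le> ennreal \<delta>"
  defines "g \<equiv> \<lambda>x. \<phi> x - reg_proj (cube a b) (cube a b) k \<alpha> \<phi> x"
    and "e \<equiv> \<lambda>x. reg_proj (cube a b) (cube a b) kh \<alpha> \<phi> x - reg_proj (cube a b) (cube a b) k \<alpha> \<phi> x"
    and "s \<equiv> sqrt (measure lebesgue (cube a b :: (real^'p) set))"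
  shows "L2norm (cube a b) (Top (cube a b) kh e)
       \<le> \<delta> * s * L2norm (cube a b) g + \<delta> * s * L2norm (cube a b) (Top (cube a b) k g) / sqrt \<alpha>"
proof -
  let ?Sp = "cube a b :: (real^'p) set" and ?Sq = "cube a b :: (real^'q) set"
  let ?kd = "\<lambda>w z. kh w z - k w z"
  have gs: "sqint ?Sp g" using K.reg_proj_residual[OF \<alpha> \<phi>] unfolding g_def by auto
  have es: "sqint ?Sp e"
    unfolding e_def by (intro sqint_diff H.sqint_reg_proj K.sqint_reg_proj \<alpha> \<phi>)
  define X where "X = L2norm ?Sq (Top ?Sp k g)"
  define Xe where "Xe = L2norm ?Sq (Top ?Sp kh e)"
  define Ye where "Ye = L2norm ?Sp e"
  have "\<alpha> * Ye^2 + Xe^2 = ip ?Sp (\<lambda>x. H.TsT g x - K.TsT g x) e"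
    unfolding Xe_def Ye_def
    by (rule H.tikhonov_energy_identity[OF es]) (simp add: reg_proj_diff_eq[OF \<alpha> \<phi>] e_def g_def)
  also have "\<dots> = ip ?Sq (Top ?Sp kh g) (Top ?Sp kh e) - ip ?Sq (Top ?Sp k g) (Top ?Sp k e)"
    using ip_diff_left[OF H.TsT_sqint[OF gs] K.TsT_sqint[OF gs] es] H.ip_Tadj_Top[OF es H.Top_sqint[OF gs]]
      K.ip_Tadj_Top[OF es K.Top_sqint[OF gs]] by simp
  also have "\<dots> = ip ?Sq (Top ?Sp ?kd g) (Top ?Sp kh e) + ip ?Sq (Top ?Sp k g) (Top ?Sp ?kd e)"
  proof -
    have "ip ?Sq (Top ?Sp kh g) (Top ?Sp kh e) = ip ?Sq (\<lambda>w. Top ?Sp k g w + Top ?Sp ?kd g w) (Top ?Sp kh e)"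
      by (rule ip_cong) (simp_all add: Top_kernel_split gs)
    moreover have "ip ?Sq (Top ?Sp k g) (Top ?Sp ?kd e)
        = ip ?Sq (Top ?Sp k g) (\<lambda>w. Top ?Sp kh e w - Top ?Sp k e w)"
      by (rule ip_cong) (simp_all add: Top_kernel_split es)
    ultimately show ?thesis
      by (simp add: ip_add_left ip_diff_right K.Top_sqint D.Top_sqint H.Top_sqint gs es)
  qed
  also have "\<dots> \<le> (\<delta> * s * L2norm ?Sp g) * Xe + (\<delta> * s * X) * Ye"
  proof (rule add_mono)
    have "ip ?Sq (Top ?Sp ?kd g) (Top ?Sp kh e) \<le> L2norm ?Sq (Top ?Sp ?kd g) * Xe"
      using ip_Cauchy_Schwarz[OF D.Top_sqint[OF gs] H.Top_sqint[OF es]] by (simp add: Xe_def)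
    also have "\<dots> \<le> (\<delta> * s * L2norm ?Sp g) * Xe"
      using D.L2norm_Top_le[OF dN \<delta> gs] by (intro mult_right_mono) (simp_all add: s_def Xe_def L2norm_nonneg)
    finally show "ip ?Sq (Top ?Sp ?kd g) (Top ?Sp kh e) \<le> (\<delta> * s * L2norm ?Sp g) * Xe" .
    have "ip ?Sq (Top ?Sp k g) (Top ?Sp ?kd e) \<le> X * L2norm ?Sq (Top ?Sp ?kd e)"
      using ip_Cauchy_Schwarz[OF K.Top_sqint[OF gs] D.Top_sqint[OF es]] by (simp add: X_def)
    also have "\<dots> \<le> X * (\<delta> * s * Ye)"
      using D.L2norm_Top_le[OF dN \<delta> es] by (intro mult_left_mono) (simp_all add: s_def Ye_def X_def L2norm_nonneg)
    finally show "ip ?Sq (Top ?Sp k g) (Top ?Sp ?kd e) \<le> (\<delta> * s * X) * Ye" by (simp add: mult_ac)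
  qed
  finally have "\<alpha> * Ye^2 + Xe^2 \<le> (\<delta> * s * L2norm ?Sp g) * Xe + (\<delta> * s * X) * Ye" .
  from quadratic_ineq_bound[OF \<alpha> _ _ _ _ this] show ?thesis
    by (simp add: \<delta> s_def X_def Xe_def Ye_def L2norm_nonneg)
qed

lemma reg_proj_diff_abs_le:
  assumes \<alpha>: "0 < \<alpha>" and \<phi>: "continuous_on (cube a b) \<phi>"
    and C: "0 \<le> C" and kN: "norm_2inf (cube a b) (cube a b) k \<le> ennreal C"
    and \<delta>: "0 \<le> \<delta>" and dN: "norm_2inf (cube a b) (cube a b) (\<lambda>w z. kh w z - k w z) \<le> ennreal \<delta>"
    and z: "z \<in> cube a b"
  defines "g \<equiv> \<lambda>x. \<phi> x - reg_proj (cube a b) (cube a b) k \<alpha> \<phi> x"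
    and "e \<equiv> \<lambda>x. reg_proj (cube a b) (cube a b) kh \<alpha> \<phi> x - reg_proj (cube a b) (cube a b) k \<alpha> \<phi> x"
    and "s \<equiv> sqrt (measure lebesgue (cube a b :: (real^'p) set))"
  shows "\<alpha> * \<bar>e z\<bar> \<le> \<delta> * L2norm (cube a b) (Top (cube a b) k g)
     + (C + \<delta>) * (\<delta> * s * L2norm (cube a b) g) + (C + \<delta>) * L2norm (cube a b) (Top (cube a b) kh e)"
proof -
  let ?Sp = "cube a b :: (real^'p) set" and ?Sq = "cube a b :: (real^'q) set"
  let ?kd = "\<lambda>w z. kh w z - k w z"
  have gs: "sqint ?Sp g" using K.reg_proj_residual[OF \<alpha> \<phi>] unfolding g_def by auto
  have es: "sqint ?Sp e"
    unfolding e_def by (intro sqint_diff H.sqint_reg_proj K.sqint_reg_proj \<alpha> \<phi>)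
  have Tkh: "\<bar>Tadj ?Sq kh v z\<bar> \<le> (C + \<delta>) * L2norm ?Sq v" if v: "sqint ?Sq v" for v
    using Tadj_kernel_split[OF v z] Tadj_abs_le_norm_2inf[OF kN C v z] Tadj_abs_le_norm_2inf[OF dN \<delta> v z]
    by (simp add: distrib_right)
  define t1 where "t1 = Tadj ?Sq ?kd (Top ?Sp k g) z"
  define t2 where "t2 = Tadj ?Sq kh (Top ?Sp ?kd g) z"
  have "H.TsT g z = Tadj ?Sq kh (\<lambda>w. Top ?Sp k g w + Top ?Sp ?kd g w) z"
    by (rule H.Tadj_cong) (simp add: Top_kernel_split gs)
  also have "\<dots> = Tadj ?Sq kh (Top ?Sp k g) z + t2"
    unfolding t2_def by (rule H.Tadj_add[OF K.Top_sqint[OF gs] D.Top_sqint[OF gs] z])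
  finally have "H.TsT g z - K.TsT g z = t1 + t2"
    using Tadj_kernel_split[OF K.Top_sqint[OF gs] z] by (simp add: t1_def)
  then have "\<alpha> * e z = t1 + t2 - H.TsT e z"
    using reg_proj_diff_eq[OF \<alpha> \<phi> z] unfolding g_def e_def by simp
  moreover have "\<bar>t1\<bar> \<le> \<delta> * L2norm ?Sq (Top ?Sp k g)"
    using Tadj_abs_le_norm_2inf[OF dN \<delta> K.Top_sqint[OF gs] z] by (simp add: t1_def)
  moreover have "\<bar>t2\<bar> \<le> (C + \<delta>) * (\<delta> * s * L2norm ?Sp g)"
    unfolding t2_def using C \<delta> D.L2norm_Top_le[OF dN \<delta> gs]
    by (intro order_trans[OF Tkh[OF D.Top_sqint[OF gs]]] mult_left_mono) (simp_all add: s_def)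
  moreover have "\<bar>H.TsT e z\<bar> \<le> (C + \<delta>) * L2norm ?Sq (Top ?Sp kh e)"
    by (rule Tkh[OF H.Top_sqint[OF es]])
  ultimately show ?thesis using \<alpha> abs_mult[of \<alpha> "e z"] by arith
qed

lemma reg_proj_perturbation_bound:
  assumes \<alpha>: "0 < \<alpha>" and \<phi>: "continuous_on (cube a b) \<phi>" and \<phi>L: "\<And>z. z \<in> cube a b \<Longrightarrow> \<bar>\<phi> z\<bar> \<le> L"
    and C: "0 \<le> C" and kN: "norm_2inf (cube a b) (cube a b) k \<le> ennreal C"
    and K\<phi>: "0 \<le> K\<phi>"
    and src: "\<And>u. sqint (cube a b) u \<Longrightarrow> \<bar>ip (cube a b) \<phi> u\<bar> \<le> K\<phi> * L2norm (cube a b) (Top (cube a b) k u)"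
    and \<delta>: "0 \<le> \<delta>" and dN: "norm_2inf (cube a b) (cube a b) (\<lambda>w z. kh w z - k w z) \<le> ennreal \<delta>"
    and z: "z \<in> cube a b"
  defines "s \<equiv> sqrt (measure lebesgue (cube a b :: (real^'p) set))"
  shows "\<bar>reg_proj (cube a b) (cube a b) kh \<alpha> \<phi> z - reg_proj (cube a b) (cube a b) k \<alpha> \<phi> z\<bar>
     \<le> (3 * s * K\<phi> * ((C + \<delta>) * \<delta>) + s * L * \<delta>) / sqrt \<alpha>"
proof -
  let ?Sp = "cube a b :: (real^'p) set" and ?Sq = "cube a b :: (real^'q) set"
  define g where "g = (\<lambda>x. \<phi> x - reg_proj ?Sp ?Sq k \<alpha> \<phi> x)"
  define e where "e = (\<lambda>x. reg_proj ?Sp ?Sq kh \<alpha> \<phi> x - reg_proj ?Sp ?Sq k \<alpha> \<phi> x)"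
  define X where "X = L2norm ?Sq (Top ?Sp k g)"
  define Y where "Y = L2norm ?Sp g"
  have s: "0 \<le> s" by (simp add: s_def)
  have L: "0 \<le> L" using \<phi>L[OF z] by linarith
  have X1: "X \<le> \<alpha> * K\<phi>" and Y1: "Y \<le> sqrt \<alpha> * K\<phi>" and X2: "X \<le> sqrt \<alpha> * (s * L)"
    using K.reg_proj_residual_bounds[OF \<alpha> \<phi> \<phi>L L K\<phi> src] unfolding X_def Y_def g_def s_def by auto
  have Xe: "L2norm ?Sq (Top ?Sp kh e) \<le> \<delta> * s * Y + \<delta> * s * X / sqrt \<alpha>"
    using L2norm_Top_reg_proj_diff_le[OF \<alpha> \<phi> \<delta> dN] unfolding X_def Y_def g_def e_def s_def .
  have "\<alpha> * \<bar>e z\<bar> \<le> \<delta> * X + (C + \<delta>) * (\<delta> * s * Y) + (C + \<delta>) * L2norm ?Sq (Top ?Sp kh e)"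
    using reg_proj_diff_abs_le[OF \<alpha> \<phi> C kN \<delta> dN z] unfolding X_def Y_def g_def e_def s_def .
  also have "\<dots> \<le> \<delta> * X + (C + \<delta>) * (\<delta> * s * Y) + (C + \<delta>) * (\<delta> * s * Y + \<delta> * s * X / sqrt \<alpha>)"
    using Xe C \<delta> by (intro add_left_mono mult_left_mono) auto
  also have "\<dots> \<le> sqrt \<alpha> * (3 * s * K\<phi> * ((C + \<delta>) * \<delta>) + s * L * \<delta>)"
  proof -
    have "X / sqrt \<alpha> \<le> \<alpha> * K\<phi> / sqrt \<alpha>" using X1 \<alpha> by (simp add: divide_right_mono)
    also have "\<alpha> * K\<phi> / sqrt \<alpha> = sqrt \<alpha> * K\<phi>"
      using real_div_sqrt[of \<alpha>] \<alpha> by (metis times_divide_eq_left less_imp_le)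
    finally have X3: "X / sqrt \<alpha> \<le> sqrt \<alpha> * K\<phi>" .
    have cd: "0 \<le> (C + \<delta>) * \<delta> * s" using C \<delta> s by simp
    have "\<delta> * X \<le> sqrt \<alpha> * (s * L * \<delta>)" using mult_left_mono[OF X2 \<delta>] by (simp add: mult_ac)
    moreover have "(C + \<delta>) * (\<delta> * s * Y) \<le> sqrt \<alpha> * (s * K\<phi> * ((C + \<delta>) * \<delta>))"
      using mult_left_mono[OF Y1 cd] by (simp add: mult_ac)
    moreover have "(C + \<delta>) * (\<delta> * s * X / sqrt \<alpha>) \<le> sqrt \<alpha> * (s * K\<phi> * ((C + \<delta>) * \<delta>))"
      using mult_left_mono[OF X3 cd] by (simp add: mult_ac)
    ultimately show ?thesis by (simp add: algebra_simps)
  qed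
  finally have "sqrt \<alpha> * (sqrt \<alpha> * \<bar>e z\<bar>) \<le> sqrt \<alpha> * (3 * s * K\<phi> * ((C + \<delta>) * \<delta>) + s * L * \<delta>)"
    using \<alpha> by (simp add: mult.assoc[symmetric])
  then have "sqrt \<alpha> * \<bar>e z\<bar> \<le> 3 * s * K\<phi> * ((C + \<delta>) * \<delta>) + s * L * \<delta>"
    by (rule mult_left_le_imp_le) (use \<alpha> in simp)
  then show ?thesis using \<alpha> by (simp add: e_def pos_le_divide_eq mult.commute)
qed

end

lemma supn_reg_proj_diff_le:
  fixes \<phi> :: "real^'p \<Rightarrow> real" and k kh :: "real^'q \<Rightarrow> real^'p \<Rightarrow> real"
  assumes cls: "(\<phi>, k) \<in> src_class a b t L \<beta> C" and ab: "a < b" and \<beta>: "0 < \<beta>" and C: "0 < C"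
    and \<alpha>: "0 < \<alpha>" and khc: "cont_kernel (cube a b) (cube a b) kh"
  defines "V \<equiv> measure lebesgue (cube a b :: (real^'p) set)"
    and "\<delta> \<equiv> norm_2inf (cube a b) (cube a b) (\<lambda>w z. kh w z - k w z)"
  shows "supn (cube a b) (\<lambda>z. reg_proj (cube a b) (cube a b) kh \<alpha> \<phi> z - reg_proj (cube a b) (cube a b) k \<alpha> \<phi> z)
    \<le> ennreal ((3 * sqrt V * ((C^2 * V) powr \<beta> * C) * (C + 1) + sqrt V * \<bar>L\<bar>) / sqrt \<alpha>) * (\<delta> + \<delta>^2)"
proof -
  define s where "s = sqrt V"
  define K\<phi> where "K\<phi> = (C^2 * V) powr \<beta> * C"
  define K where "K = 3 * s * K\<phi> * (C + 1) + s * \<bar>L\<bar>"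
  have s: "0 \<le> s" and K\<phi>: "0 \<le> K\<phi>" using C by (simp_all add: s_def K\<phi>_def V_def)
  have "0 < V" using measure_cube_pos[OF ab] by (simp add: V_def)
  then have K0: "0 < K" unfolding K_def using C by (intro add_pos_nonneg mult_pos_pos) (auto simp: K\<phi>_def s_def)
  then have K: "0 < K / sqrt \<alpha>" using \<alpha> by simp
  show ?thesis
  proof (cases "\<delta> = \<infinity>")
    case True
    then have "ennreal (K / sqrt \<alpha>) * (\<delta> + \<delta>^2) = \<infinity>" using K0 \<alpha> by (simp add: ennreal_mult_top)
    then show ?thesis by (simp add: K_def K\<phi>_def s_def)
  next
    case False
    then obtain d where d: "\<delta> = ennreal d" "0 \<le> d" by (cases \<delta>) auto
    interpret kernel_pair a b k kh
      using src_classD(1)[OF cls ab \<beta> C] by unfold_locales (simp_all add: cube_kernel_def khc)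
    have "supn (cube a b) (\<lambda>z. reg_proj (cube a b) (cube a b) kh \<alpha> \<phi> z - reg_proj (cube a b) (cube a b) k \<alpha> \<phi> z)
        \<le> ennreal (K / sqrt \<alpha> * (d + d^2))"
    proof (rule supn_le)
      fix z :: "real^'p" assume z: "z \<in> cube a b"
      have "\<bar>reg_proj (cube a b) (cube a b) kh \<alpha> \<phi> z - reg_proj (cube a b) (cube a b) k \<alpha> \<phi> z\<bar>
          \<le> (3 * s * K\<phi> * ((C + d) * d) + s * L * d) / sqrt \<alpha>"
        using reg_proj_perturbation_bound[OF \<alpha> src_classD(2,3)[OF cls ab \<beta> C] less_imp_le[OF C]
            src_classD(4)[OF cls ab \<beta> C] K\<phi> _ d(2) d(1)[unfolded \<delta>_def, THEN eq_refl] z]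
          src_classD(5)[OF cls ab \<beta> C]
        by (simp add: s_def K\<phi>_def V_def)
      also have "\<dots> \<le> K / sqrt \<alpha> * (d + d^2)"
      proof -
        have "3 * s * K\<phi> * ((C + d) * d) \<le> 3 * s * K\<phi> * ((C + 1) * (d + d^2))"
          using C d(2) s K\<phi> by (intro mult_left_mono) (simp_all add: algebra_simps power2_eq_square)
        moreover have "L * d \<le> \<bar>L\<bar> * (d + d^2)" using d(2) by (intro mult_mono) auto
        then have "s * L * d \<le> s * \<bar>L\<bar> * (d + d^2)" using s by (simp add: mult.assoc mult_left_mono)
        ultimately have "3 * s * K\<phi> * ((C + d) * d) + s * L * d \<le> K * (d + d^2)"
          by (simp add: K_def algebra_simps)
        from divide_right_mono[OF this real_sqrt_ge_zero[OF less_imp_le[OF \<alpha>]]] show ?thesis by simp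
      qed
      finally show "\<bar>reg_proj (cube a b) (cube a b) kh \<alpha> \<phi> z - reg_proj (cube a b) (cube a b) k \<alpha> \<phi> z\<bar>
          \<le> K / sqrt \<alpha> * (d + d^2)" .
    qed
    also have "ennreal (K / sqrt \<alpha> * (d + d^2)) = ennreal (K / sqrt \<alpha>) * (\<delta> + \<delta>^2)"
      using ennreal_mult[OF less_imp_le[OF K], of "d + d^2"] ennreal_plus[of d "d^2"] d
      by (simp add: ennreal_power)
    finally show ?thesis by (simp add: K_def K\<phi>_def s_def)
  qed
qed

section \<open>Integration over the random kernel\<close>

definition quad_root :: "real \<Rightarrow> real \<Rightarrow> real" where
  "quad_root c t = (sqrt (1 + 4 * max t 0 / c) - 1) / 2"

lemma quad_root_nonneg: "0 < c \<Longrightarrow> 0 \<le> quad_root c t"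
  unfolding quad_root_def by (simp add: zero_le_divide_iff)

lemma quad_root_eq: assumes c: "0 < c" shows "c * (quad_root c t + (quad_root c t)^2) = max t 0"
proof -
  define s where "s = sqrt (1 + 4 * max t 0 / c)"
  have s2: "s^2 = 1 + 4 * max t 0 / c" unfolding s_def using c by (simp add: zero_le_divide_iff)
  have "quad_root c t + (quad_root c t)^2 = (s^2 - 1) / 4" unfolding quad_root_def s_def[symmetric]
    by (simp add: power2_eq_square field_simps)
  also have "\<dots> = max t 0 / c" using s2 by simp
  finally show ?thesis using c by simp
qed

lemma quad_root_le: assumes c: "0 < c" and v: "0 \<le> v" and t: "t \<le> c * (v + v^2)" shows "quad_root c t \<le> v"
proof (rule ccontr)
  assume "\<not> quad_root c t \<le> v"
  then have lt: "v < quad_root c t" by simp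
  have "v^2 < (quad_root c t)^2" using lt v by (intro power_strict_mono) auto
  then have "v + v^2 < quad_root c t + (quad_root c t)^2" using lt by simp
  then have "c * (v + v^2) < c * (quad_root c t + (quad_root c t)^2)" using c by simp
  also have "\<dots> = max t 0" by (rule quad_root_eq[OF c])
  finally have "c * (v + v^2) < max t 0" .
  moreover have "0 \<le> c * (v + v^2)" using c v by simp
  ultimately show False using t by simp
qed

lemma ennreal_quadratic: "0 \<le> c \<Longrightarrow> 0 \<le> x \<Longrightarrow>
  ennreal c * (ennreal x + (ennreal x)^2) = ennreal (c * (x + x^2))"
  by (simp add: ennreal_mult ennreal_power ennreal_plus)

definition enn_quad_root :: "real \<Rightarrow> ennreal \<Rightarrow> ennreal" where
  "enn_quad_root c y = (if y = \<infinity> then \<infinity> else ennreal (quad_root c (enn2real y)))"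

lemma enn_quad_root_eq: assumes c: "0 < c" shows "ennreal c * (enn_quad_root c y + (enn_quad_root c y)^2) = y"
proof (cases "y = \<infinity>")
  case True then show ?thesis using c by (simp add: enn_quad_root_def ennreal_mult_top)
next
  case False
  then obtain t where t: "y = ennreal t" "0 \<le> t" by (cases y) auto
  have "ennreal c * (enn_quad_root c y + (enn_quad_root c y)^2) = ennreal (c * (quad_root c t + (quad_root c t)^2))"
    using c quad_root_nonneg[OF c, of t] t False
    by (simp add: enn_quad_root_def ennreal_quadratic)
  also have "\<dots> = y" using quad_root_eq[OF c, of t] t by simp
  finally show ?thesis .
qed

lemma enn_quad_root_le: assumes c: "0 < c" and y: "y \<le> ennreal c * (v + v^2)" shows "enn_quad_root c y \<le> v"
proof (cases "v = \<infinity>")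
  case True then show ?thesis by simp
next
  case False
  then obtain v' where v': "v = ennreal v'" "0 \<le> v'" by (cases v) auto
  have "y \<le> ennreal (c * (v' + v'^2))"
    using y v' c by (simp add: ennreal_quadratic)
  moreover have X0: "0 \<le> c * (v' + v'^2)" using c v' by simp
  have "y < \<infinity>" using le_less_trans[OF \<open>y \<le> ennreal (c * (v' + v'^2))\<close> ennreal_less_top] by simp
  then have yfin: "y \<noteq> \<infinity>" by simp
  then obtain t where t1: "y = ennreal t" "0 \<le> t" by (cases y) auto
  have t: "y = ennreal t" "0 \<le> t" "t \<le> c * (v' + v'^2)"
    using t1 \<open>y \<le> ennreal (c * (v' + v'^2))\<close> X0 by (auto simp: ennreal_le_iff)
  have "quad_root c t \<le> v'" by (rule quad_root_le[OF c v'(2) t(3)])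
  then show ?thesis using t v' by (simp add: enn_quad_root_def)
qed

lemma nn_integral_le_sqrt_nn_integral_square:
  assumes P: "prob_space M" and u: "u \<in> borel_measurable M" and fin: "(\<integral>\<^sup>+x. (u x)^2 \<partial>M) < \<infinity>"
  shows "(\<integral>\<^sup>+x. u x \<partial>M) \<le> ennreal (sqrt (enn2real (\<integral>\<^sup>+x. (u x)^2 \<partial>M)))"
proof -
  interpret prob_space M by (rule P)
  let ?E = "\<integral>\<^sup>+x. (u x)^2 \<partial>M"
  have "(\<integral>\<^sup>+x. u x * 1 \<partial>M)^2 \<le> ?E * (\<integral>\<^sup>+x. 1^2 \<partial>M)"
    by (rule Cauchy_Schwarz_nn_integral) (use u in auto)
  then have sq: "(\<integral>\<^sup>+x. u x \<partial>M)^2 \<le> ?E" by (simp add: emeasure_space_1)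
  obtain e where e: "?E = ennreal e" "0 \<le> e" using fin by (cases ?E) auto
  then have "(\<integral>\<^sup>+x. u x \<partial>M)^2 < \<infinity>" using sq by (simp add: le_less_trans)
  then obtain t where t: "(\<integral>\<^sup>+x. u x \<partial>M) = ennreal t" "0 \<le> t"
    by (cases "(\<integral>\<^sup>+x. u x \<partial>M)") (auto simp: ennreal_power)
  have "ennreal (t^2) \<le> ennreal e" using sq t e by (simp add: ennreal_power)
  then have "t^2 \<le> e" using e(2) by (simp add: ennreal_le_iff)
  then have "t \<le> sqrt e" using t(2) by (simp add: real_le_rsqrt)
  then show ?thesis using t e by simp
qed

text \<open>No measurability of \<open>f\<close> is assumed: for a random kernel, \<open>\<omega> \<mapsto> \<parallel>K\<^sub>\<omega> - k\<parallel>\<^sub>2\<^sub>,\<^sub>\<infinity>\<close> is a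
  supremum over an uncountable family. Every simple function \<open>g\<close> below \<open>c (f + f\<^sup>2)\<close> equals
  \<open>c (u + u\<^sup>2)\<close> for the simple function \<open>u = enn_quad_root c \<circ> g \<le> f\<close>, to which Cauchy-Schwarz applies.\<close>

lemma nn_integral_quadratic_le:
  fixes f :: "'a \<Rightarrow> ennreal"
  assumes P: "prob_space M" and c: "0 \<le> c" and fin: "(\<integral>\<^sup>+x. (f x)^2 \<partial>M) < \<infinity>"
  shows "(\<integral>\<^sup>+x. ennreal c * (f x + (f x)^2) \<partial>M)
     \<le> ennreal c * (ennreal (sqrt (enn2real (\<integral>\<^sup>+x. (f x)^2 \<partial>M))) + (\<integral>\<^sup>+x. (f x)^2 \<partial>M))"
proof (cases "c = 0")
  case True then show ?thesis by simp
next
  case False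
  then have c: "0 < c" using c by simp
  let ?E = "\<integral>\<^sup>+x. (f x)^2 \<partial>M"
  show ?thesis
    unfolding nn_integral_def[of M "\<lambda>x. ennreal c * (f x + (f x)^2)"]
  proof (rule SUP_least)
    fix g assume "g \<in> {g. simple_function M g \<and> g \<le> (\<lambda>x. ennreal c * (f x + (f x)^2))}"
    then have gs: "simple_function M g" and gle: "\<And>x. g x \<le> ennreal c * (f x + (f x)^2)"
      by (auto simp: le_fun_def)
    define u where "u = (\<lambda>x. enn_quad_root c (g x))"
    have us: "simple_function M u" using simple_function_compose[OF gs, of "enn_quad_root c"] by (simp add: u_def o_def)
    have um: "u \<in> borel_measurable M" by (rule borel_measurable_simple_function[OF us])
    have uf: "u x \<le> f x" for x unfolding u_def by (rule enn_quad_root_le[OF c gle])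
    have gu: "g x = ennreal c * (u x + (u x)^2)" for x unfolding u_def by (rule enn_quad_root_eq[OF c, symmetric])
    have u2: "(\<integral>\<^sup>+x. (u x)^2 \<partial>M) \<le> ?E"
      by (intro nn_integral_mono power_mono uf) simp
    then have u2f: "(\<integral>\<^sup>+x. (u x)^2 \<partial>M) < \<infinity>" using fin by (simp add: le_less_trans)
    have "integral\<^sup>S M g = (\<integral>\<^sup>+x. g x \<partial>M)" by (rule nn_integral_eq_simple_integral[OF gs, symmetric])
    also have "\<dots> = (\<integral>\<^sup>+x. ennreal c * (u x + (u x)^2) \<partial>M)" by (simp add: gu)
    also have "\<dots> = ennreal c * ((\<integral>\<^sup>+x. u x \<partial>M) + (\<integral>\<^sup>+x. (u x)^2 \<partial>M))"
      using um by (simp add: nn_integral_cmult nn_integral_add)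
    also have "\<dots> \<le> ennreal c * (ennreal (sqrt (enn2real ?E)) + ?E)"
    proof (intro mult_left_mono add_mono u2)
      have "(\<integral>\<^sup>+x. u x \<partial>M) \<le> ennreal (sqrt (enn2real (\<integral>\<^sup>+x. (u x)^2 \<partial>M)))"
        by (rule nn_integral_le_sqrt_nn_integral_square[OF P um u2f])
      also have "\<dots> \<le> ennreal (sqrt (enn2real ?E))"
        using u2 fin by (intro ennreal_leI real_sqrt_le_mono enn2real_mono) auto
      finally show "(\<integral>\<^sup>+x. u x \<partial>M) \<le> ennreal (sqrt (enn2real ?E))" .
    qed simp
    finally show "integral\<^sup>S M g \<le> ennreal c * (ennreal (sqrt (enn2real ?E)) + ?E)" .
  qed
qed

lemma ennreal_sqrt_add_le_rate:
  fixes K0 \<alpha> e B :: real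
  assumes K0: "0 \<le> K0" and \<alpha>: "0 < \<alpha>" and e: "0 \<le> e" "e \<le> B"
  shows "ennreal (K0 / sqrt \<alpha>) * (ennreal (sqrt e) + ennreal e)
     \<le> ennreal (K0 * (1 + sqrt B)) * ennreal (sqrt (e / \<alpha>))"
proof -
  have B: "0 \<le> B" using e by simp
  have "e = sqrt e * sqrt e" using e by simp
  also have "\<dots> \<le> sqrt B * sqrt e" using e by (intro mult_right_mono real_sqrt_le_mono) auto
  finally have eb: "e \<le> sqrt B * sqrt e" .
  have "ennreal (K0 / sqrt \<alpha>) * (ennreal (sqrt e) + ennreal e) = ennreal (K0 / sqrt \<alpha> * (sqrt e + e))"
  proof -
    have X0: "0 \<le> K0 / sqrt \<alpha>" using K0 \<alpha> by simp
    have Y0: "0 \<le> sqrt e + e" using e by simp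
    show ?thesis using ennreal_mult[OF X0 Y0] ennreal_plus[of "sqrt e" e] e by simp
  qed
  also have "\<dots> \<le> ennreal (K0 / sqrt \<alpha> * (sqrt e + sqrt B * sqrt e))"
    using K0 \<alpha> eb by (intro ennreal_leI mult_left_mono add_left_mono) auto
  also have "K0 / sqrt \<alpha> * (sqrt e + sqrt B * sqrt e) = K0 * (1 + sqrt B) * sqrt (e / \<alpha>)"
    using \<alpha> by (simp add: real_sqrt_divide field_simps)
  also have "ennreal (K0 * (1 + sqrt B) * sqrt (e / \<alpha>)) = ennreal (K0 * (1 + sqrt B)) * ennreal (sqrt (e / \<alpha>))"
    using K0 B \<alpha> e by (simp add: ennreal_mult)
  finally show ?thesis .
qed

lemma nn_integral_supn_reg_proj_diff_le:
  fixes \<phi> :: "real^'p \<Rightarrow> real" and k :: "real^'q \<Rightarrow> real^'p \<Rightarrow> real"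
    and Kh :: "'w \<Rightarrow> real^'q \<Rightarrow> real^'p \<Rightarrow> real"
  assumes cls: "(\<phi>, k) \<in> src_class a b t L \<beta> C" and ab: "a < b" and \<beta>: "0 < \<beta>" and C: "0 < C"
    and \<alpha>: "0 < \<alpha>" and P: "prob_space M"
    and AE: "AE \<omega> in M. cont_kernel (cube a b) (cube a b) (Kh \<omega>)"
    and B: "(\<integral>\<^sup>+\<omega>. (norm_2inf (cube a b) (cube a b) (\<lambda>w z. Kh \<omega> w z - k w z))^2 \<partial>M) \<le> ennreal B"
  defines "V \<equiv> measure lebesgue (cube a b :: (real^'p) set)"
  defines "K \<equiv> 3 * sqrt V * ((C^2 * V) powr \<beta> * C) * (C + 1) + sqrt V * \<bar>L\<bar>"
  shows "(\<integral>\<^sup>+\<omega>. supn (cube a b) (\<lambda>z. reg_proj (cube a b) (cube a b) (Kh \<omega>) \<alpha> \<phi> z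
           - reg_proj (cube a b) (cube a b) k \<alpha> \<phi> z) \<partial>M)
    \<le> ennreal (K * (1 + sqrt (max B 0))) * ennreal (sqrt (enn2real
         (\<integral>\<^sup>+\<omega>. (norm_2inf (cube a b) (cube a b) (\<lambda>w z. Kh \<omega> w z - k w z))^2 \<partial>M) / \<alpha>))"
proof -
  define \<delta> where "\<delta> \<omega> = norm_2inf (cube a b) (cube a b) (\<lambda>w z. Kh \<omega> w z - k w z)" for \<omega>
  define E where "E = (\<integral>\<^sup>+\<omega>. (\<delta> \<omega>)^2 \<partial>M)"
  have K: "0 \<le> K" using C by (simp add: K_def V_def)
  have "E \<le> ennreal (max B 0)" unfolding E_def \<delta>_def using B by (rule order_trans) simp
  then obtain e where e: "E = ennreal e" "0 \<le> e" "e \<le> max B 0"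
    by (cases E) (auto simp: ennreal_le_iff top_unique)
  have "(\<integral>\<^sup>+\<omega>. supn (cube a b) (\<lambda>z. reg_proj (cube a b) (cube a b) (Kh \<omega>) \<alpha> \<phi> z
         - reg_proj (cube a b) (cube a b) k \<alpha> \<phi> z) \<partial>M)
      \<le> (\<integral>\<^sup>+\<omega>. ennreal (K / sqrt \<alpha>) * (\<delta> \<omega> + (\<delta> \<omega>)^2) \<partial>M)"
    using AE by (intro nn_integral_mono_AE) (auto elim!: eventually_mono
        simp: K_def V_def \<delta>_def intro: supn_reg_proj_diff_le[OF cls ab \<beta> C \<alpha>])
  also have "\<dots> \<le> ennreal (K / sqrt \<alpha>) * (ennreal (sqrt (enn2real E)) + E)"
    unfolding E_def by (rule nn_integral_quadratic_le[OF P]) (use K e \<alpha> in \<open>auto simp: E_def\<close>)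
  also have "\<dots> \<le> ennreal (K * (1 + sqrt (max B 0))) * ennreal (sqrt (e / \<alpha>))"
    using ennreal_sqrt_add_le_rate[OF K \<alpha> e(2,3)] e by simp
  finally show ?thesis using e by (simp add: E_def \<delta>_def)
qed

theorem lemma2:
  fixes a b t L \<beta> C :: real
    and \<alpha> :: "nat \<Rightarrow> real"
    and M :: "nat \<Rightarrow> (real^'p \<Rightarrow> real) \<Rightarrow> (real^'q \<Rightarrow> real^'p \<Rightarrow> real) \<Rightarrow> 'w measure"
    and Kh :: "nat \<Rightarrow> (real^'p \<Rightarrow> real) \<Rightarrow> (real^'q \<Rightarrow> real^'p \<Rightarrow> real) \<Rightarrow> 'w
               \<Rightarrow> real^'q \<Rightarrow> real^'p \<Rightarrow> real"
  assumes ab: "a < b" and t: "0 \<le> t" and \<beta>: "0 < \<beta>" and C: "0 < C"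
    and \<alpha>: "\<And>n. 0 < \<alpha> n"
    and model: "\<And>n \<phi> k. (\<phi>, k) \<in> src_class a b t L \<beta> C \<Longrightarrow>
        prob_space (M n \<phi> k) \<and>
        (\<forall>w z. (\<lambda>\<omega>. Kh n \<phi> k \<omega> w z) \<in> borel_measurable (M n \<phi> k)) \<and>
        (AE \<omega> in M n \<phi> k. cont_kernel (cube a b) (cube a b) (Kh n \<phi> k \<omega>))"
    and bnd: "\<exists>B. \<forall>n \<phi> k. (\<phi>, k) \<in> src_class a b t L \<beta> C \<longrightarrow>
        (\<integral>\<^sup>+\<omega>. (norm_2inf (cube a b) (cube a b) (\<lambda>w z. Kh n \<phi> k \<omega> w z - k w z))^2 \<partial>M n \<phi> k)
          \<le> ennreal B"
  shows "\<exists>K. \<forall>n \<phi> k. (\<phi>, k) \<in> src_class a b t L \<beta> C \<longrightarrow>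
        (\<integral>\<^sup>+\<omega>. supn (cube a b)
             (\<lambda>z. reg_proj (cube a b) (cube a b) (Kh n \<phi> k \<omega>) (\<alpha> n) \<phi> z
                 - reg_proj (cube a b) (cube a b) k (\<alpha> n) \<phi> z) \<partial>M n \<phi> k)
        \<le> ennreal K * ennreal (sqrt (enn2real
             (\<integral>\<^sup>+\<omega>. (norm_2inf (cube a b) (cube a b) (\<lambda>w z. Kh n \<phi> k \<omega> w z - k w z))^2 \<partial>M n \<phi> k)
             / \<alpha> n))"
proof -
  obtain B where B: "\<And>n \<phi> k. (\<phi>, k) \<in> src_class a b t L \<beta> C \<Longrightarrow>
        (\<integral>\<^sup>+\<omega>. (norm_2inf (cube a b) (cube a b) (\<lambda>w z. Kh n \<phi> k \<omega> w z - k w z))^2 \<partial>M n \<phi> k)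
          \<le> ennreal B" using bnd by blast
  define V where "V = measure lebesgue (cube a b :: (real^'p) set)"
  define K where "K = 3 * sqrt V * ((C^2 * V) powr \<beta> * C) * (C + 1) + sqrt V * \<bar>L\<bar>"
  show ?thesis
  proof (intro exI[of _ "K * (1 + sqrt (max B 0))"] allI impI)
    fix n :: nat and \<phi> :: "real^'p \<Rightarrow> real" and k :: "real^'q \<Rightarrow> real^'p \<Rightarrow> real"
    assume cls: "(\<phi>, k) \<in> src_class a b t L \<beta> C"
    show "(\<integral>\<^sup>+\<omega>. supn (cube a b) (\<lambda>z. reg_proj (cube a b) (cube a b) (Kh n \<phi> k \<omega>) (\<alpha> n) \<phi> z
           - reg_proj (cube a b) (cube a b) k (\<alpha> n) \<phi> z) \<partial>M n \<phi> k)
        \<le> ennreal (K * (1 + sqrt (max B 0))) * ennreal (sqrt (enn2real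
             (\<integral>\<^sup>+\<omega>. (norm_2inf (cube a b) (cube a b) (\<lambda>w z. Kh n \<phi> k \<omega> w z - k w z))^2 \<partial>M n \<phi> k)
             / \<alpha> n))"
      unfolding K_def V_def using model[OF cls]
      by (intro nn_integral_supn_reg_proj_diff_le[OF cls ab \<beta> C \<alpha> _ _ B[OF cls]]) auto
  qed
qed

end
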